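(* Let $X$ be a Banach function space over a finite or $\sigma$-finite measure space $(\Omega,\Sigma,\mu)$ which satisfies the Komlós condition and the non-strict Opial property with respect to $\tau$. Let $C$ be a norm-closed convex bounded subset of $X$ and let $T:C\to C$ be an affine Lipschitzian mapping. If $$S(T)<\frac{1+r_\tau(1)}{t(C)},$$ then $T$ has a fixed point.
   Context: $\tau$ denotes the topology of convergence in measure if $\mu$ is finite, and of local convergence in measure if $\mu$ is $\sigma$-finite (along subsequences this is equivalent to $\mu$-a.e. convergence, and the quantities below may equivalently be defined with $\mu$-a.e. convergence in place of $\tau$-convergence). Komlós condition: for every bounded sequence $(f_n)\subset X$ there exist a subsequence $(g_n)$ of $(f_n)$ and $g\in X$ such that for every further subsequence $(h_n)$ of $(g_n)$, $\frac1n\sum_{i=1}^n h_i\to g$ $\mu$-a.e. Non-strict Opial property w.r.t. $\tau$: for every sequence $(x_n)$ $\tau$-converging to $x_0\in X$, $\liminf_n\|x_n-x_0\|\le\liminf_n\|x_n-x\|$ for all $x\in X$. Opial modulus: for $c\ge0$, $r_\tau(c)=\inf\{\liminf_n\|x_n-x\|-1\}$, the infimum over all $x\in X$ with $\|x\|\ge c$ and all $\tau$-null sequences $(x_n)\subset X$ with $\liminf_n\|x_n\|\ge1$. Coefficient: $t(C)=\inf\{\lambda\ge0:\ \inf_{c\in C}\limsup_n\|c-x_n\|\le\lambda\limsup_n\|x-x_n\|$ for all $(x_n)\subset C$, $x\in X$ with $x_n\to x$ in $\tau\}$. $T$ affine means $T(\lambda x+(1-\lambda)y)=\lambda Tx+(1-\lambda)Ty$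 for $x,y\in C$, $\lambda\in[0,1]$. For Lipschitzian $T$, $|T|=\sup\{\|Tx-Ty\|/\|x-y\|: x,y\in C, x\ne y\}$ and $S(T)=\liminf_n \frac{|T|+|T^2|+\cdots+|T^n|}{n}$. *)

theory Defs
  imports "HOL-Probability.Probability"
begin

text \<open>Elements of the Banach function space are represented by real-valued measurable
  functions on the measure space; the norm N respects a.e. equality (by the ideal property),
  so equality in X means equality mu-a.e.\<close>

definition fdiff :: "('a \<Rightarrow> real) \<Rightarrow> ('a \<Rightarrow> real) \<Rightarrow> 'a \<Rightarrow> real" where
  "fdiff f g = (\<lambda>w. f w - g w)"

definition banach_function_space ::
  "'a measure \<Rightarrow> ('a \<Rightarrow> real) set \<Rightarrow> (('a \<Rightarrow> real) \<Rightarrow> real) \<Rightarrow> bool" where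
  "banach_function_space M X N \<longleftrightarrow>
     X \<subseteq> borel_measurable M \<and>
     (\<forall>f\<in>X. \<forall>g\<in>borel_measurable M. (AE w in M. \<bar>g w\<bar> \<le> \<bar>f w\<bar>) \<longrightarrow> g \<in> X \<and> N g \<le> N f) \<and>
     (\<forall>f\<in>X. N f = 0 \<longleftrightarrow> (AE w in M. f w = 0)) \<and>
     (\<forall>f\<in>X. \<forall>c::real. N (\<lambda>w. c * f w) = \<bar>c\<bar> * N f) \<and>
     (\<forall>f\<in>X. \<forall>g\<in>X. (\<lambda>w. f w + g w) \<in> X \<and> N (\<lambda>w. f w + g w) \<le> N f + N g) \<and>
     (\<forall>s. (\<forall>n. s n \<in> X) \<and> (\<forall>e>0. \<exists>K. \<forall>m\<ge>K. \<forall>n\<ge>K. N (fdiff (s m) (s n)) < e)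
          \<longrightarrow> (\<exists>f\<in>X. (\<lambda>n. N (fdiff (s n) f)) \<longlonglongrightarrow> 0))"

definition tau_conv :: "'a measure \<Rightarrow> (nat \<Rightarrow> 'a \<Rightarrow> real) \<Rightarrow> ('a \<Rightarrow> real) \<Rightarrow> bool" where
  "tau_conv M s f \<longleftrightarrow>
     (\<forall>A\<in>sets M. emeasure M A < \<infinity> \<longrightarrow>
        (\<forall>e>0. (\<lambda>n. emeasure M {w\<in>A. e < \<bar>s n w - f w\<bar>}) \<longlonglongrightarrow> 0))"

definition komlos_condition ::
  "'a measure \<Rightarrow> ('a \<Rightarrow> real) set \<Rightarrow> (('a \<Rightarrow> real) \<Rightarrow> real) \<Rightarrow> bool" where
  "komlos_condition M X N \<longleftrightarrow>
     (\<forall>f. (\<forall>n. f n \<in> X) \<and> (\<exists>B. \<forall>n. N (f n) \<le> B) \<longrightarrow>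
        (\<exists>(\<sigma>::nat \<Rightarrow> nat) g. strict_mono \<sigma> \<and> g \<in> X \<and>
           (\<forall>\<rho>::nat \<Rightarrow> nat. strict_mono \<rho> \<longrightarrow>
              (AE w in M. (\<lambda>n. (\<Sum>i<n. f (\<sigma> (\<rho> i)) w) / real n) \<longlonglongrightarrow> g w))))"

definition nonstrict_opial ::
  "'a measure \<Rightarrow> ('a \<Rightarrow> real) set \<Rightarrow> (('a \<Rightarrow> real) \<Rightarrow> real) \<Rightarrow> bool" where
  "nonstrict_opial M X N \<longleftrightarrow>
     (\<forall>s x0. (\<forall>n. s n \<in> X) \<and> x0 \<in> X \<and> tau_conv M s x0 \<longrightarrow>
        (\<forall>x\<in>X. liminf (\<lambda>n. ereal (N (fdiff (s n) x0))) \<le> liminf (\<lambda>n. ereal (N (fdiff (s n) x)))))"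

definition opial_modulus ::
  "'a measure \<Rightarrow> ('a \<Rightarrow> real) set \<Rightarrow> (('a \<Rightarrow> real) \<Rightarrow> real) \<Rightarrow> real \<Rightarrow> ereal" where
  "opial_modulus M X N c =
     Inf {liminf (\<lambda>n. ereal (N (fdiff (s n) x))) - 1 | x s.
            x \<in> X \<and> N x \<ge> c \<and> (\<forall>n. s n \<in> X) \<and> tau_conv M s (\<lambda>_. 0) \<and>
            liminf (\<lambda>n. ereal (N (s n))) \<ge> 1}"

definition t_coeff ::
  "'a measure \<Rightarrow> ('a \<Rightarrow> real) set \<Rightarrow> (('a \<Rightarrow> real) \<Rightarrow> real) \<Rightarrow> ('a \<Rightarrow> real) set \<Rightarrow> ereal" where
  "t_coeff M X N C =
     Inf {ereal l | l. l \<ge> 0 \<and>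
            (\<forall>s x. (\<forall>n. s n \<in> C) \<and> x \<in> X \<and> tau_conv M s x \<longrightarrow>
               (INF c\<in>C. limsup (\<lambda>n. ereal (N (fdiff c (s n)))))
                 \<le> ereal l * limsup (\<lambda>n. ereal (N (fdiff x (s n)))))}"

definition norm_closed :: "('a \<Rightarrow> real) set \<Rightarrow> (('a \<Rightarrow> real) \<Rightarrow> real) \<Rightarrow> ('a \<Rightarrow> real) set \<Rightarrow> bool" where
  "norm_closed X N C \<longleftrightarrow>
     (\<forall>s x. (\<forall>n. s n \<in> C) \<and> x \<in> X \<and> (\<lambda>n. N (fdiff (s n) x)) \<longlonglongrightarrow> 0 \<longrightarrow> x \<in> C)"

definition fconvex :: "('a \<Rightarrow> real) set \<Rightarrow> bool" where
  "fconvex C \<longleftrightarrow> (\<forall>x\<in>C. \<forall>y\<in>C. \<forall>l::real. 0 \<le> l \<and> l \<le> 1 \<longrightarrow> (\<lambda>w. l * x w + (1 - l) * y w) \<in> C)"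

definition nbounded :: "(('a \<Rightarrow> real) \<Rightarrow> real) \<Rightarrow> ('a \<Rightarrow> real) set \<Rightarrow> bool" where
  "nbounded N C \<longleftrightarrow> (\<exists>B. \<forall>x\<in>C. N x \<le> B)"

definition affine_on :: "'a measure \<Rightarrow> ('a \<Rightarrow> real) set \<Rightarrow> (('a \<Rightarrow> real) \<Rightarrow> ('a \<Rightarrow> real)) \<Rightarrow> bool" where
  "affine_on M C T \<longleftrightarrow> (\<forall>x\<in>C. \<forall>y\<in>C. \<forall>l::real. 0 \<le> l \<and> l \<le> 1 \<longrightarrow>
      (AE w in M. T (\<lambda>v. l * x v + (1 - l) * y v) w = l * T x w + (1 - l) * T y w))"

definition lipschitzian :: "(('a \<Rightarrow> real) \<Rightarrow> real) \<Rightarrow> ('a \<Rightarrow> real) set \<Rightarrow> (('a \<Rightarrow> real) \<Rightarrow> ('a \<Rightarrow> real)) \<Rightarrow> bool" where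
  "lipschitzian N C T \<longleftrightarrow> (\<exists>k. \<forall>x\<in>C. \<forall>y\<in>C. N (fdiff (T x) (T y)) \<le> k * N (fdiff x y))"

text \<open>|T|: the smallest Lipschitz constant (x \<noteq> y in X means N(x - y) \<noteq> 0); 0 if no such pair.\<close>
definition lipconst :: "(('a \<Rightarrow> real) \<Rightarrow> real) \<Rightarrow> ('a \<Rightarrow> real) set \<Rightarrow> (('a \<Rightarrow> real) \<Rightarrow> ('a \<Rightarrow> real)) \<Rightarrow> real" where
  "lipconst N C T = Sup (insert 0 {N (fdiff (T x) (T y)) / N (fdiff x y) | x y.
                          x \<in> C \<and> y \<in> C \<and> N (fdiff x y) \<noteq> 0})"

definition S_coeff :: "(('a \<Rightarrow> real) \<Rightarrow> real) \<Rightarrow> ('a \<Rightarrow> real) set \<Rightarrow> (('a \<Rightarrow> real) \<Rightarrow> ('a \<Rightarrow> real)) \<Rightarrow> ereal" where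
  "S_coeff N C T = liminf (\<lambda>n. ereal ((\<Sum>k=1..n. lipconst N C (T ^^ k)) / real n))"

end

theory Submission
  imports Defs
begin

text \<open>Averaging the iterates, A_p z = (T z + ... + T^p z) / p, yields maps with Lipschitz
  constants k_p = (|T| + ... + |T^p|) / p, whose liminf is S(T), and which are almost fixed:
  T is affine, so T (A_p z) - A_p z = (T^(p+1) z - T z) / p.
  Choose reals \<kappa> > S(T), l > t(C) and r \<le> r_\<tau>(1) with \<kappa> l < 1 + r, and indices p_n with
  k_(p_n) \<le> \<kappa>. Komlos averages of the approximate fixed points A_(p_n) z converge a.e., hence in
  \<tau>, to some g; if their distance to g tends to a, the coefficient t(C) provides a centre c \<in> C at
  asymptotic distance at most l a from them. Restarting from c, the non-strict Opial property and
  the modulus r_\<tau>(1) shrink the radius a by the factor \<lambda> = (1 + \<kappa> l) / (2 + r) < 1, while the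
  centre moves by at most (2 + \<kappa>) l a. The centres thus form a Cauchy sequence, whose limit is a
  fixed point of T.\<close>

section \<open>Real sequences\<close>

definition limsup_le :: "(nat \<Rightarrow> real) \<Rightarrow> real \<Rightarrow> bool" where
  "limsup_le f b \<longleftrightarrow> (\<forall>e>0. eventually (\<lambda>i. f i \<le> b + e) sequentially)"

lemma limsup_leD: "limsup_le f b \<Longrightarrow> 0 < e \<Longrightarrow> eventually (\<lambda>i. f i \<le> b + e) sequentially"
  unfolding limsup_le_def by auto

lemma limsup_le_iff: "limsup_le f b \<longleftrightarrow> limsup (\<lambda>i. ereal (f i)) \<le> ereal b"
proof
  assume b: "limsup_le f b"
  show "limsup (\<lambda>i. ereal (f i)) \<le> ereal b"
  proof (rule ereal_le_epsilon2)
    fix e :: real assume "0 < e"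
    then have "eventually (\<lambda>i. ereal (f i) \<le> ereal (b + e)) sequentially"
      using b unfolding limsup_le_def by auto
    then have "limsup (\<lambda>i. ereal (f i)) \<le> ereal (b + e)" by (rule Limsup_bounded)
    then show "limsup (\<lambda>i. ereal (f i)) \<le> ereal b + ereal e" by simp
  qed
next
  assume b: "limsup (\<lambda>i. ereal (f i)) \<le> ereal b"
  show "limsup_le f b"
    unfolding limsup_le_def
  proof (intro allI impI)
    fix e :: real assume "0 < e"
    then have "limsup (\<lambda>i. ereal (f i)) < ereal (b + e)" using b by (auto intro: order.strict_trans1)
    then have "eventually (\<lambda>i. ereal (f i) < ereal (b + e)) sequentially" by (rule Limsup_lessD)
    then show "eventually (\<lambda>i. f i \<le> b + e) sequentially" by eventually_elim auto
  qed
qed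

lemma limsup_le_if_tendsto: "f \<longlonglongrightarrow> a \<Longrightarrow> limsup_le f a"
  unfolding limsup_le_iff by (intro eq_refl lim_imp_Limsup) (auto simp: tendsto_ereal)

lemma limsup_le_mono:
  assumes "\<And>i. f i \<le> g i" "limsup_le g b" "b \<le> b'" shows "limsup_le f b'"
  unfolding limsup_le_def
proof (intro allI impI)
  fix e :: real assume "0 < e"
  then have "eventually (\<lambda>i. g i \<le> b + e) sequentially" by (rule limsup_leD[OF assms(2)])
  then show "eventually (\<lambda>i. f i \<le> b' + e) sequentially"
  proof eventually_elim
    case (elim i)
    then show ?case using assms(1)[of i] assms(3) by linarith
  qed
qed

lemma limsup_le_add: "limsup_le f a \<Longrightarrow> limsup_le g b \<Longrightarrow> limsup_le (\<lambda>i. f i + g i) (a + b)"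
  unfolding limsup_le_def
proof (intro allI impI)
  fix e :: real
  assume "\<forall>e>0. eventually (\<lambda>i. f i \<le> a + e) sequentially"
    and "\<forall>e>0. eventually (\<lambda>i. g i \<le> b + e) sequentially" and "0 < e"
  then have "eventually (\<lambda>i. f i \<le> a + e/2) sequentially" "eventually (\<lambda>i. g i \<le> b + e/2) sequentially"
    by auto
  then show "eventually (\<lambda>i. f i + g i \<le> a + b + e) sequentially"
    by eventually_elim auto
qed

lemma limsup_le_cmult:
  assumes "0 \<le> c" "limsup_le f a" shows "limsup_le (\<lambda>i. c * f i) (c * a)"
  unfolding limsup_le_def
proof (intro allI impI)
  fix e :: real assume e: "0 < e"
  show "eventually (\<lambda>i. c * f i \<le> c * a + e) sequentially"
  proof (cases "c = 0")
    case True then show ?thesis using e by simp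
  next
    case False
    then have "0 < c" using assms(1) by simp
    then have "eventually (\<lambda>i. f i \<le> a + e / c) sequentially"
      using assms(2) e by (simp add: limsup_leD)
    then show ?thesis
    proof eventually_elim
      case (elim i)
      then have "c * f i \<le> c * (a + e / c)" using \<open>0 < c\<close> by (intro mult_left_mono) auto
      also have "c * (a + e / c) = c * a + e" using \<open>0 < c\<close> by (simp add: distrib_left)
      finally show ?case .
    qed
  qed
qed

lemma limsup_le_sum:
  "finite I \<Longrightarrow> (\<And>q. q \<in> I \<Longrightarrow> limsup_le (f q) (b q)) \<Longrightarrow> limsup_le (\<lambda>i. \<Sum>q\<in>I. f q i) (\<Sum>q\<in>I. b q)"
proof (induction I rule: finite_induct)
  case empty then show ?case by (simp add: limsup_le_def)
next
  case (insert x F)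
  have "limsup_le (f x) (b x)" by (rule insert.prems) simp
  moreover have "limsup_le (\<lambda>i. \<Sum>q\<in>F. f q i) (\<Sum>q\<in>F. b q)"
    using insert.prems by (intro insert.IH) simp
  ultimately have "limsup_le (\<lambda>i. f x i + (\<Sum>q\<in>F. f q i)) (b x + (\<Sum>q\<in>F. b q))"
    by (rule limsup_le_add)
  then show ?case using insert.hyps by simp
qed

lemma limsup_le_const_iff: "limsup_le (\<lambda>i. c) b \<longleftrightarrow> c \<le> b"
  by (simp add: limsup_le_iff Limsup_const)

lemma limsup_le_nonneg: "(\<And>i. 0 \<le> f i) \<Longrightarrow> limsup_le f b \<Longrightarrow> 0 \<le> b"
  using limsup_le_mono[of "\<lambda>_. 0" f b b] limsup_le_const_iff[of 0 b] by simp

lemma tendsto_0_if_limsup_le_0: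
  assumes "\<And>i. 0 \<le> f i" "limsup_le f 0" shows "f \<longlonglongrightarrow> 0"
proof (rule tendstoI)
  fix e :: real assume "0 < e"
  then have "eventually (\<lambda>i. f i \<le> 0 + e/2) sequentially" by (intro limsup_leD[OF assms(2)]) simp
  then show "eventually (\<lambda>i. dist (f i) 0 < e) sequentially"
    by eventually_elim (use assms(1) \<open>0 < e\<close> in auto)
qed

lemma liminf_le_if_limsup_le: "limsup_le f b \<Longrightarrow> liminf (\<lambda>i. ereal (f i)) \<le> ereal b"
  unfolding limsup_le_iff by (rule order_trans[OF Liminf_le_Limsup]) simp

lemma cesaro_mean_tendsto_0:
  fixes b :: "nat \<Rightarrow> real"
  assumes nonneg: "\<And>i. 0 \<le> b i" and lim: "b \<longlonglongrightarrow> 0"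
  shows "(\<lambda>j. (\<Sum>i\<le>j. b i) / real (Suc j)) \<longlonglongrightarrow> 0"
proof (rule tendsto_0_if_limsup_le_0)
  show "0 \<le> (\<Sum>i\<le>j. b i) / real (Suc j)" for j using nonneg by (simp add: sum_nonneg)
  show "limsup_le (\<lambda>j. (\<Sum>i\<le>j. b i) / real (Suc j)) 0"
    unfolding limsup_le_def
  proof (intro allI impI)
    fix e :: real assume e: "0 < e"
    have "eventually (\<lambda>i. b i < e/2) sequentially" using order_tendstoD(2)[OF lim, of "e/2"] e by simp
    then obtain K where K: "\<And>i. K \<le> i \<Longrightarrow> b i < e/2" by (auto simp: eventually_sequentially)
    define S where "S = (\<Sum>i<K. b i)"
    obtain J :: nat where J: "2 * S / e \<le> J" using real_arch_simple by blast
    have "(\<Sum>i\<le>j. b i) / real (Suc j) \<le> 0 + e" if "J \<le> j" for j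
    proof -
      have "2 * S \<le> real J * e" using J e by (simp add: divide_le_eq)
      also have "\<dots> \<le> real (Suc j) * e" using that e by (intro mult_right_mono) auto
      finally have S: "S \<le> real (Suc j) * (e/2)" by simp
      have "(\<Sum>i\<le>j. b i) \<le> (\<Sum>i\<in>{..<K} \<union> {K..j}. b i)"
        using nonneg by (intro sum_mono2) auto
      also have "\<dots> \<le> S + (\<Sum>i\<in>{K..j}. b i)"
        unfolding S_def by (simp add: sum_Un nonneg sum_nonneg)
      also have "(\<Sum>i\<in>{K..j}. b i) \<le> real (card {K..j}) * (e/2)"
        using sum_bounded_above[of "{K..j}" b "e/2"] K by (auto intro: less_imp_le)
      also have "\<dots> \<le> real (Suc j) * (e/2)" using e by (intro mult_right_mono) auto
      also note S
      finally show ?thesis by (simp add: divide_le_eq mult.commute)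
    qed
    then show "eventually (\<lambda>j. (\<Sum>i\<le>j. b i) / real (Suc j) \<le> 0 + e) sequentially"
      by (auto simp: eventually_sequentially)
  qed
qed

lemma frequently_imp_subseq:
  assumes "frequently P sequentially"
  shows "\<exists>r :: nat \<Rightarrow> nat. strict_mono r \<and> (\<forall>n. P (r n))"
proof (intro exI conjI allI)
  have inf: "infinite {n. P n}"
    using assms by (simp add: frequently_cofinite[symmetric] cofinite_eq_sequentially)
  show "strict_mono (enumerate {n. P n})" using inf by (simp add: strict_mono_def)
  show "P (enumerate {n. P n} n)" for n using enumerate_in_set[OF inf] by simp
qed

lemma ereal_mult_less_if_less_divide:
  fixes t u :: ereal
  assumes "0 < q" "0 \<le> t" "ereal q < u / t"
  shows "ereal q * t < u"
proof (cases t)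
  case (real t')
  show ?thesis
  proof (cases "t' = 0")
    case True
    then have "u / t = u * \<infinity>" using real by (simp add: divide_ereal_def)
    then have "0 < u" using assms(1,3) by (cases u) (auto split: if_splits)
    then show ?thesis using True real by (simp add: zero_ereal_def)
  next
    case False
    then have "0 < ereal t'" "ereal t' \<noteq> \<infinity>" using real assms(2) by auto
    then show ?thesis using assms(3) ereal_less_divide_pos real by (simp add: mult.commute)
  qed
qed (use assms in auto)

lemma frequently_le_if_liminf_less:
  assumes "liminf (\<lambda>n. ereal (f n)) < ereal q"
  shows "frequently (\<lambda>n. f n \<le> q) sequentially"
proof -
  have "\<not> ereal q \<le> liminf (\<lambda>n. ereal (f n))" using assms by simp
  then obtain y where y: "y < ereal q" "\<not> eventually (\<lambda>n. y < ereal (f n)) sequentially"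
    unfolding le_Liminf_iff by auto
  then have "frequently (\<lambda>n. \<not> y < ereal (f n)) sequentially" by (simp add: not_eventually)
  then show ?thesis
    by (rule frequently_elim1) (use y(1) in \<open>auto simp: not_less dest: le_less_trans\<close>)
qed

lemma exists_real_constants:
  fixes S R t :: ereal
  assumes "S < (1 + R) / t" "0 \<le> S" "0 \<le> t" "-1 \<le> R"
  obtains q l r where "S < ereal q" "t < ereal l" "ereal r \<le> R" "q * l < 1 + r" "0 < l"
proof -
  obtain q where q: "S < ereal q" "ereal q < (1 + R) / t" using ereal_dense2[OF assms(1)] by blast
  have q0: "0 < q" using q(1) assms(2) by (metis ereal_less(2) le_less_trans)
  have qt: "ereal q * t < 1 + R" by (rule ereal_mult_less_if_less_divide[OF q0 assms(3) q(2)])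
  obtain t' where t': "t = ereal t'" "0 \<le> t'"
    using assms(3) qt q0 by (cases t) auto
  show ?thesis
  proof (cases R)
    case PInf
    then show ?thesis using q t' by (intro that[of q "t' + 1" "q * (t' + 1)"]) auto
  next
    case (real R')
    with qt t' have H: "q * t' < 1 + R'" by simp
    define l where "l = t' + (1 + R' - q * t') / (2 * q)"
    have "t' < l" unfolding l_def using H q0 by simp
    have "q * l = q * t' + (1 + R' - q * t') / 2" unfolding l_def using q0 by (simp add: field_simps)
    then have "q * l < 1 + R'" using H by (simp add: field_simps)
    with \<open>t' < l\<close> show ?thesis using q(1) t' real by (intro that[of q l R']) auto
  qed (use assms(4) in simp)
qed

section \<open>Local convergence in measure\<close>

lemma tau_conv_if_AE_tendsto:
  assumes f: "\<And>n. f n \<in> borel_measurable M" and g: "g \<in> borel_measurable M"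
    and ae: "AE w in M. (\<lambda>n. f n w) \<longlonglongrightarrow> g w"
  shows "tau_conv M f g"
  unfolding tau_conv_def
proof (intro ballI impI allI)
  fix A e assume A: "A \<in> sets M" "emeasure M A < \<infinity>" and e: "(0::real) < e"
  note [measurable] = f g
  define E where "E k = {w \<in> space M. e < \<bar>f k w - g w\<bar>}" for k
  have [measurable]: "E k \<in> sets M" for k unfolding E_def by measurable
  define B where "B n = A \<inter> (\<Union>k\<in>{n..}. E k)" for n
  have B: "B n \<in> sets M" for n unfolding B_def using A by auto
  have "decseq B" unfolding B_def decseq_def by auto (meson atLeast_iff le_trans)
  moreover have "emeasure M (B n) \<noteq> \<infinity>" for n
    using emeasure_mono[of "B n" A M] A unfolding B_def by (auto simp: top_unique)
  moreover have "emeasure M (\<Inter>n. B n) = 0"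
  proof -
    have "AE w in M. w \<notin> (\<Inter>n. B n)"
      using ae
    proof eventually_elim
      case (elim w)
      then have "eventually (\<lambda>k. \<bar>f k w - g w\<bar> < e) sequentially"
        using e by (auto simp: tendsto_iff dist_real_def)
      then obtain n where "\<And>k. k \<ge> n \<Longrightarrow> \<bar>f k w - g w\<bar> < e"
        by (auto simp: eventually_sequentially)
      then have "w \<notin> B n" unfolding B_def E_def by (auto, fastforce)
      then show ?case by auto
    qed
    moreover have I: "(\<Inter>n. B n) \<in> sets M" using B by auto
    ultimately show ?thesis
      using AE_iff_measurable[OF I, of "\<lambda>w. w \<notin> (\<Inter>n. B n)"] sets.sets_into_space[OF I] by auto
  qed
  ultimately have lim: "(\<lambda>n. emeasure M (B n)) \<longlonglongrightarrow> 0"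
    using Lim_emeasure_decseq[of B M] B by auto
  have le: "emeasure M {w \<in> A. e < \<bar>f n w - g w\<bar>} \<le> emeasure M (B n)" for n
    using sets.sets_into_space[OF A(1)] by (intro emeasure_mono[OF _ B]) (auto simp: B_def E_def)
  show "(\<lambda>n. emeasure M {w \<in> A. e < \<bar>f n w - g w\<bar>}) \<longlonglongrightarrow> 0"
    by (rule tendsto_sandwich[of "\<lambda>n. 0" _ _ "\<lambda>n. emeasure M (B n)"]) (use le lim in auto)
qed

lemma tau_conv_subseq: "strict_mono r \<Longrightarrow> tau_conv M f g \<Longrightarrow> tau_conv M (\<lambda>n. f (r n)) g"
  unfolding tau_conv_def using LIMSEQ_subseq_LIMSEQ[unfolded comp_def] by blast

lemma tau_conv_iff_fdiff: "tau_conv M f g \<longleftrightarrow> tau_conv M (\<lambda>n. fdiff (f n) g) (\<lambda>_. 0)"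
  by (simp add: tau_conv_def fdiff_def)

lemma tau_conv_cmult_0:
  assumes "tau_conv M f (\<lambda>_. 0)" "0 < c"
  shows "tau_conv M (\<lambda>n w. c * f n w) (\<lambda>_. 0)"
  unfolding tau_conv_def
proof (intro ballI impI allI)
  fix A e assume "A \<in> sets M" "emeasure M A < \<infinity>" "(0::real) < e"
  moreover have "{w \<in> A. e < \<bar>c * f n w - 0\<bar>} = {w \<in> A. e / c < \<bar>f n w - 0\<bar>}" for n
    using assms(2) by (auto simp: abs_mult field_simps)
  ultimately show "(\<lambda>n. emeasure M {w \<in> A. e < \<bar>c * f n w - 0\<bar>}) \<longlonglongrightarrow> 0"
    using assms unfolding tau_conv_def by simp
qed

section \<open>Finite averages\<close>

definition avg :: "'i set \<Rightarrow> ('i \<Rightarrow> 'a \<Rightarrow> real) \<Rightarrow> 'a \<Rightarrow> real" where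
  "avg I f = (\<lambda>w. (\<Sum>i\<in>I. f i w) / real (card I))"

lemma avg_insert:
  assumes "finite F" "x \<notin> F" "F \<noteq> {}"
  shows "avg (insert x F) f =
    (\<lambda>w. (1 / real (Suc (card F))) * f x w + (1 - 1 / real (Suc (card F))) * avg F f w)"
proof
  fix w
  have n: "0 < real (card F)" using assms by (simp add: card_gt_0_iff)
  have "1 - 1 / real (Suc (card F)) = real (card F) / real (Suc (card F))" by (simp add: field_simps)
  then show "avg (insert x F) f w =
      (1 / real (Suc (card F))) * f x w + (1 - 1 / real (Suc (card F))) * avg F f w"
    using assms n by (simp add: avg_def add_divide_distrib)
qed

lemma fdiff_avg_const: "I \<noteq> {} \<Longrightarrow> finite I \<Longrightarrow> fdiff (avg I f) x = avg I (\<lambda>i. fdiff (f i) x)"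
  unfolding avg_def fdiff_def by (auto simp: fun_eq_iff sum_subtractf field_simps)

lemma fdiff_avg_avg: "fdiff (avg I f) (avg I g) = avg I (\<lambda>i. fdiff (f i) (g i))"
  unfolding avg_def fdiff_def by (auto simp: fun_eq_iff sum_subtractf diff_divide_distrib)

lemma avg_reindex: "inj_on r I \<Longrightarrow> avg I (\<lambda>i. f (r i)) = avg (r ` I) f"
  unfolding avg_def by (simp add: sum.reindex card_image)

section \<open>Banach function spaces\<close>

locale function_space =
  fixes M :: "'a measure" and X :: "('a \<Rightarrow> real) set" and N :: "('a \<Rightarrow> real) \<Rightarrow> real"
  assumes banach: "banach_function_space M X N"
begin

lemma X_measurable: "f \<in> X \<Longrightarrow> f \<in> borel_measurable M"
  using banach unfolding banach_function_space_def by blast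

lemma X_ideal:
  "f \<in> X \<Longrightarrow> g \<in> borel_measurable M \<Longrightarrow> (AE w in M. \<bar>g w\<bar> \<le> \<bar>f w\<bar>) \<Longrightarrow> g \<in> X \<and> N g \<le> N f"
  using banach unfolding banach_function_space_def by blast

lemma N_eq_0_iff: "f \<in> X \<Longrightarrow> N f = 0 \<longleftrightarrow> (AE w in M. f w = 0)"
  using banach unfolding banach_function_space_def by blast

lemma N_cmult: "f \<in> X \<Longrightarrow> N (\<lambda>w. c * f w) = \<bar>c\<bar> * N f"
  using banach unfolding banach_function_space_def by blast

lemma X_add: "f \<in> X \<Longrightarrow> g \<in> X \<Longrightarrow> (\<lambda>w. f w + g w) \<in> X"
  using banach unfolding banach_function_space_def by blast

lemma N_add: "f \<in> X \<Longrightarrow> g \<in> X \<Longrightarrow> N (\<lambda>w. f w + g w) \<le> N f + N g"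
  using banach unfolding banach_function_space_def by blast

lemma X_complete:
  "(\<And>n. s n \<in> X) \<Longrightarrow> (\<forall>e>0. \<exists>K. \<forall>m\<ge>K. \<forall>n\<ge>K. N (fdiff (s m) (s n)) < e)
    \<Longrightarrow> \<exists>f\<in>X. (\<lambda>n. N (fdiff (s n) f)) \<longlonglongrightarrow> 0"
  using banach unfolding banach_function_space_def by blast

text \<open>X is only assumed to be closed under addition; scalar multiples of f are obtained from
  the ideal property, by domination with 2^n f.\<close>

lemma X_cmult:
  assumes "f \<in> X" shows "(\<lambda>w. c * f w) \<in> X"
proof -
  have pow2: "(\<lambda>w. 2 ^ n * f w) \<in> X" for n :: nat
  proof (induction n)
    case 0 then show ?case using assms by simp
  next
    case (Suc n)
    have "(\<lambda>w. 2 ^ Suc n * f w) = (\<lambda>w. 2 ^ n * f w + 2 ^ n * f w)" by (auto simp: fun_eq_iff)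
    then show ?case using X_add[OF Suc.IH Suc.IH] by simp
  qed
  obtain n :: nat where n: "\<bar>c\<bar> \<le> 2 ^ n"
    using real_arch_pow[of 2 "\<bar>c\<bar>"] by (auto dest: less_imp_le)
  have "\<bar>c * f w\<bar> \<le> \<bar>2 ^ n * f w\<bar>" for w
    using n by (simp add: abs_mult mult_right_mono)
  then show ?thesis
    using X_ideal[OF pow2, of "\<lambda>w. c * f w" n] X_measurable[OF assms] by auto
qed

lemma X_lincomb: "f \<in> X \<Longrightarrow> g \<in> X \<Longrightarrow> (\<lambda>w. a * f w + b * g w) \<in> X"
  by (intro X_add X_cmult)

lemma N_lincomb: "f \<in> X \<Longrightarrow> g \<in> X \<Longrightarrow> N (\<lambda>w. a * f w + b * g w) \<le> \<bar>a\<bar> * N f + \<bar>b\<bar> * N g"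
  using N_add[of "\<lambda>w. a * f w" "\<lambda>w. b * g w"] X_cmult N_cmult by auto

lemma X_fdiff: "f \<in> X \<Longrightarrow> g \<in> X \<Longrightarrow> fdiff f g \<in> X"
  using X_lincomb[of f g 1 "-1"] by (simp add: fdiff_def)

lemma N_fdiff_le_add: "f \<in> X \<Longrightarrow> g \<in> X \<Longrightarrow> N (fdiff f g) \<le> N f + N g"
  using N_lincomb[of f g 1 "-1"] by (simp add: fdiff_def)

lemma zero_in_X: "f \<in> X \<Longrightarrow> (\<lambda>w. 0) \<in> X"
  using X_cmult[of f 0] by simp

lemma N_nonneg: "f \<in> X \<Longrightarrow> 0 \<le> N f"
  using X_ideal[of f "\<lambda>w. 0"] N_eq_0_iff[OF zero_in_X] by auto

lemma N_fdiff_nonneg: "f \<in> X \<Longrightarrow> g \<in> X \<Longrightarrow> 0 \<le> N (fdiff f g)"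
  by (intro N_nonneg X_fdiff)

lemma N_AE_cong:
  assumes "f \<in> X" "g \<in> borel_measurable M" "AE w in M. f w = g w"
  shows "g \<in> X" "N g = N f"
proof -
  have "AE w in M. \<bar>g w\<bar> \<le> \<bar>f w\<bar>" using assms(3) by eventually_elim auto
  then have g: "g \<in> X" and "N g \<le> N f" using X_ideal[OF assms(1,2)] by auto
  have "AE w in M. \<bar>f w\<bar> \<le> \<bar>g w\<bar>" using assms(3) by eventually_elim auto
  then have "N f \<le> N g" using X_ideal[OF g] X_measurable[OF assms(1)] by auto
  with g \<open>N g \<le> N f\<close> show "g \<in> X" "N g = N f" by simp_all
qed

lemma N_fdiff_commute: "f \<in> X \<Longrightarrow> g \<in> X \<Longrightarrow> N (fdiff f g) = N (fdiff g f)"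
  using N_cmult[OF X_fdiff, of f g "-1"] by (simp add: fdiff_def)

lemma N_fdiff_triangle:
  "f \<in> X \<Longrightarrow> g \<in> X \<Longrightarrow> h \<in> X \<Longrightarrow> N (fdiff f h) \<le> N (fdiff f g) + N (fdiff g h)"
  using N_add[OF X_fdiff X_fdiff, of f g g h] by (simp add: fdiff_def)

lemma N_fdiff_self: "f \<in> X \<Longrightarrow> N (fdiff f f) = 0"
  using N_eq_0_iff[OF X_fdiff, of f f] by (simp add: fdiff_def)

lemma AE_eq_if_N_fdiff_eq_0: "f \<in> X \<Longrightarrow> g \<in> X \<Longrightarrow> N (fdiff f g) = 0 \<Longrightarrow> AE w in M. f w = g w"
  using N_eq_0_iff[OF X_fdiff[of f g]] by (auto simp: fdiff_def)

lemma X_sum: "finite I \<Longrightarrow> I \<noteq> {} \<Longrightarrow> (\<And>i. i \<in> I \<Longrightarrow> f i \<in> X) \<Longrightarrow> (\<lambda>w. \<Sum>i\<in>I. f i w) \<in> X"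
  by (induction I rule: finite_ne_induct) (auto intro: X_add)

lemma N_sum:
  "finite I \<Longrightarrow> I \<noteq> {} \<Longrightarrow> (\<And>i. i \<in> I \<Longrightarrow> f i \<in> X) \<Longrightarrow> N (\<lambda>w. \<Sum>i\<in>I. f i w) \<le> (\<Sum>i\<in>I. N (f i))"
proof (induction I rule: finite_ne_induct)
  case (insert x F)
  have "N (\<lambda>w. f x w + (\<Sum>i\<in>F. f i w)) \<le> N (f x) + N (\<lambda>w. \<Sum>i\<in>F. f i w)"
    using insert by (intro N_add X_sum) auto
  also have "\<dots> \<le> N (f x) + (\<Sum>i\<in>F. N (f i))" using insert by simp
  finally show ?case using insert.hyps by simp
qed simp

lemma N_avg_le:
  assumes "finite I" "I \<noteq> {}" "\<And>i. i \<in> I \<Longrightarrow> f i \<in> X"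
  shows "N (avg I f) \<le> (\<Sum>i\<in>I. N (f i)) / real (card I)"
proof -
  have "N (avg I f) = (1 / real (card I)) * N (\<lambda>w. \<Sum>i\<in>I. f i w)"
    unfolding avg_def using N_cmult[OF X_sum[OF assms], where c = "1 / real (card I)"] by simp
  also have "\<dots> \<le> (1 / real (card I)) * (\<Sum>i\<in>I. N (f i))"
    using N_sum[OF assms] by (intro mult_left_mono) auto
  finally show ?thesis by simp
qed

lemma limsup_le_avg:
  assumes I: "finite I" "I \<noteq> {}" and f: "\<And>q. q \<in> I \<Longrightarrow> f q \<in> X" and u: "\<And>i. u i \<in> X"
    and bound: "\<And>q. q \<in> I \<Longrightarrow> limsup_le (\<lambda>i. N (fdiff (f q) (u i))) b"
  shows "limsup_le (\<lambda>i. N (fdiff (avg I f) (u i))) b"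
proof (rule limsup_le_mono)
  show "N (fdiff (avg I f) (u i)) \<le> (1 / real (card I)) * (\<Sum>q\<in>I. N (fdiff (f q) (u i)))" for i
    using N_avg_le[OF I, of "\<lambda>q. fdiff (f q) (u i)"] f u I
    by (simp add: fdiff_avg_const X_fdiff)
  show "limsup_le (\<lambda>i. (1 / real (card I)) * (\<Sum>q\<in>I. N (fdiff (f q) (u i))))
      ((1 / real (card I)) * (\<Sum>q\<in>I. b))"
    by (intro limsup_le_cmult limsup_le_sum I bound) auto
  show "(1 / real (card I)) * (\<Sum>q\<in>I. b) \<le> b" using I by simp
qed

lemma geometric_telescope:
  assumes s: "\<And>n. s n \<in> X" and lam: "lam < 1"
    and step: "\<And>n. N (fdiff (s (Suc n)) (s n)) \<le> B * lam ^ n" and "m \<le> n"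
  shows "N (fdiff (s n) (s m)) \<le> B * (lam ^ m - lam ^ n) / (1 - lam)"
  using \<open>m \<le> n\<close>
proof (induction n rule: dec_induct)
  case base then show ?case using N_fdiff_self[OF s] by simp
next
  case (step n)
  have "N (fdiff (s (Suc n)) (s m)) \<le> N (fdiff (s (Suc n)) (s n)) + N (fdiff (s n) (s m))"
    by (intro N_fdiff_triangle s)
  also have "\<dots> \<le> B * lam ^ n + B * (lam ^ m - lam ^ n) / (1 - lam)"
    using step.IH assms(3)[of n] by linarith
  also have "\<dots> = B * (lam ^ m - lam ^ Suc n) / (1 - lam)"
    using lam by (simp add: field_simps)
  finally show ?case .
qed

lemma geometric_tail:
  assumes s: "\<And>n. s n \<in> X" and lam: "0 \<le> lam" "lam < 1" and B: "0 \<le> B"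
    and step: "\<And>n. N (fdiff (s (Suc n)) (s n)) \<le> B * lam ^ n" and "k \<le> m" "k \<le> n"
  shows "N (fdiff (s m) (s n)) \<le> B * lam ^ k / (1 - lam)"
proof -
  have ordered: "N (fdiff (s n') (s m')) \<le> B * lam ^ k / (1 - lam)" if "k \<le> m'" "m' \<le> n'" for m' n'
  proof -
    have "0 \<le> lam ^ n'" using lam(1) by simp
    then have "lam ^ m' - lam ^ n' \<le> lam ^ k"
      using power_decreasing[OF that(1) lam(1) less_imp_le[OF lam(2)]] by linarith
    then show ?thesis
      using geometric_telescope[OF s lam(2) step that(2)] lam B
      by (smt (verit) divide_right_mono mult_left_mono)
  qed
  show ?thesis
  proof (cases "m \<le> n")
    case True
    then show ?thesis using ordered[of m n] assms(6) N_fdiff_commute[OF s s, of m n] by simp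
  next
    case False
    then show ?thesis using ordered[of n m] assms(7) by simp
  qed
qed

lemma geometric_cauchy_limit:
  assumes s: "\<And>n. s n \<in> X" and lam: "0 \<le> lam" "lam < 1" and B: "0 \<le> B"
    and step: "\<And>n. N (fdiff (s (Suc n)) (s n)) \<le> B * lam ^ n"
  shows "\<exists>x\<in>X. (\<lambda>n. N (fdiff (s n) x)) \<longlonglongrightarrow> 0"
proof (rule X_complete[OF s], intro allI impI)
  fix e :: real assume "0 < e"
  have "(\<lambda>k. B * lam ^ k / (1 - lam)) \<longlonglongrightarrow> B * 0 / (1 - lam)"
    using lam by (intro tendsto_intros) auto
  then have "eventually (\<lambda>k. B * lam ^ k / (1 - lam) < e) sequentially"
    using \<open>0 < e\<close> by (simp add: order_tendstoD(2))
  then obtain k where "B * lam ^ k / (1 - lam) < e" by (auto simp: eventually_sequentially)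
  then show "\<exists>K. \<forall>m\<ge>K. \<forall>n\<ge>K. N (fdiff (s m) (s n)) < e"
    using geometric_tail[OF s lam B step] by (meson le_less_trans)
qed

end

section \<open>The coefficient t(C) and the Opial modulus\<close>

lemma t_coeff_nonneg: "0 \<le> t_coeff M X N C"
  unfolding t_coeff_def by (intro Inf_greatest) auto

lemma t_coeff_less_witness:
  assumes "t_coeff M X N C < ereal l"
  obtains l0 where "0 \<le> l0" "l0 < l"
    "\<And>s x. (\<forall>n. s n \<in> C) \<Longrightarrow> x \<in> X \<Longrightarrow> tau_conv M s x \<Longrightarrow>
       (INF c\<in>C. limsup (\<lambda>n. ereal (N (fdiff c (s n))))) \<le> ereal l0 * limsup (\<lambda>n. ereal (N (fdiff x (s n))))"
  using assms unfolding t_coeff_def by (auto simp: Inf_less_iff)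

context function_space
begin

lemma opial_modulus_ge_minus_1: "-1 \<le> opial_modulus M X N 1"
  unfolding opial_modulus_def
proof (intro Inf_greatest, clarify)
  fix x and s :: "nat \<Rightarrow> 'a \<Rightarrow> real" assume "x \<in> X" "\<forall>n. s n \<in> X"
  then have "0 \<le> liminf (\<lambda>n. ereal (N (fdiff (s n) x)))"
    by (intro Liminf_bounded always_eventually) (simp add: N_fdiff_nonneg)
  then show "-1 \<le> liminf (\<lambda>n. ereal (N (fdiff (s n) x))) - 1"
    by (cases "liminf (\<lambda>n. ereal (N (fdiff (s n) x)))") (auto simp: one_ereal_def)
qed

text \<open>The definition of the modulus, rescaled from radius 1 to radius a.\<close>

lemma opial_modulus_lower_bound:
  assumes r: "ereal r \<le> opial_modulus M X N 1"
    and u: "\<And>i. u i \<in> X" "tau_conv M u (\<lambda>_. 0)" "(\<lambda>i. N (u i)) \<longlonglongrightarrow> a" and a: "0 < a"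
    and x: "x \<in> X" "a \<le> N x" and bound: "limsup_le (\<lambda>i. N (fdiff (u i) x)) \<beta>"
  shows "a * (1 + r) \<le> \<beta>"
proof -
  define s where "s i = (\<lambda>w. (1/a) * u i w)" for i
  define x' where "x' = (\<lambda>w. (1/a) * x w)"
  have s: "s i \<in> X" for i unfolding s_def by (intro X_cmult u)
  have x': "x' \<in> X" unfolding x'_def by (intro X_cmult x)
  have "1 \<le> N x'" unfolding x'_def using N_cmult[OF x(1), of "1/a"] a x(2) by simp
  moreover have "tau_conv M s (\<lambda>_. 0)" unfolding s_def by (rule tau_conv_cmult_0[OF u(2)]) (use a in simp)
  moreover have "liminf (\<lambda>n. ereal (N (s n))) = 1"
  proof -
    have "N (s n) = N (u n) / a" for n
      unfolding s_def using N_cmult[OF u(1), where c = "1/a"] a by simp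
    moreover have "(\<lambda>n. N (u n) / a) \<longlonglongrightarrow> a / a" by (intro tendsto_divide u(3) tendsto_const) (use a in simp)
    ultimately have "(\<lambda>n. N (s n)) \<longlonglongrightarrow> 1" using a by simp
    then show ?thesis using a by (intro lim_imp_Liminf) (auto simp: tendsto_ereal one_ereal_def)
  qed
  ultimately have "opial_modulus M X N 1 \<le> liminf (\<lambda>n. ereal (N (fdiff (s n) x'))) - 1"
    unfolding opial_modulus_def using s x'
    by (intro Inf_lower CollectI exI[of _ x'] exI[of _ s]) auto
  also have "liminf (\<lambda>n. ereal (N (fdiff (s n) x'))) = liminf (\<lambda>n. ereal ((1/a) * N (fdiff (u n) x)))"
  proof -
    have "fdiff (s n) x' = (\<lambda>w. (1/a) * fdiff (u n) x w)" for n
      unfolding s_def x'_def fdiff_def by (simp add: fun_eq_iff diff_divide_distrib)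
    then show ?thesis using N_cmult[OF X_fdiff[OF u(1) x(1)], where c = "1/a"] a by simp
  qed
  finally have r': "ereal r \<le> liminf (\<lambda>n. ereal ((1/a) * N (fdiff (u n) x))) - 1"
    using r by (rule order_trans[rotated])
  have "liminf (\<lambda>n. ereal ((1/a) * N (fdiff (u n) x))) \<le> ereal ((1/a) * \<beta>)"
    using a by (intro liminf_le_if_limsup_le limsup_le_cmult bound) simp
  then have "ereal r \<le> ereal ((1/a) * \<beta>) - 1"
    using order_trans[OF r' ereal_minus_mono[OF _ order.refl]] by blast
  then show ?thesis using a by (simp add: one_ereal_def field_simps)
qed

text \<open>Stretching e to norm a brings the previous lemma into play.\<close>

lemma opial_modulus_interior_bound:
  assumes r: "ereal r \<le> opial_modulus M X N 1"
    and u: "\<And>i. u i \<in> X" "tau_conv M u (\<lambda>_. 0)" "(\<lambda>i. N (u i)) \<longlonglongrightarrow> a"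
    and e: "e \<in> X" "N e \<le> a" and bound: "limsup_le (\<lambda>i. N (fdiff (u i) e)) \<rho>"
  shows "N e * (2 + r) \<le> \<rho> + a"
proof (cases "N e = 0")
  case True
  have "0 \<le> \<rho>" using bound by (rule limsup_le_nonneg[rotated]) (simp add: N_fdiff_nonneg u e)
  moreover have "0 \<le> a" using N_nonneg[OF e(1)] e(2) by simp
  ultimately show ?thesis using True by simp
next
  case False
  define b where "b = N e"
  have b: "0 < b" "b \<le> a" using False N_nonneg[OF e(1)] e(2) unfolding b_def by auto
  define q where "q = a / b"
  have q: "1 \<le> q" "b * q = a" unfolding q_def using b by auto
  define e' where "e' = (\<lambda>w. q * e w)"
  have e': "e' \<in> X" "a \<le> N e'" unfolding e'_def using X_cmult[OF e(1)] N_cmult[OF e(1)] q b_def by auto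
  have "N (fdiff (u i) e') \<le> q * N (fdiff (u i) e) + (q - 1) * N (u i)" for i
  proof -
    have "fdiff (u i) e' = (\<lambda>w. q * fdiff (u i) e w + (1 - q) * u i w)"
      unfolding e'_def fdiff_def by (auto simp: fun_eq_iff algebra_simps)
    then show ?thesis using N_lincomb[OF X_fdiff[OF u(1) e(1)] u(1), where a = q and b = "1 - q"] q by simp
  qed
  moreover have "limsup_le (\<lambda>i. q * N (fdiff (u i) e) + (q - 1) * N (u i)) (q * \<rho> + (q - 1) * a)"
    using q by (intro limsup_le_add limsup_le_cmult bound limsup_le_if_tendsto u(3)) auto
  ultimately have "limsup_le (\<lambda>i. N (fdiff (u i) e')) (q * \<rho> + (q - 1) * a)"
    by (rule limsup_le_mono) simp
  then have "a * (1 + r) \<le> q * \<rho> + (q - 1) * a"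
    using b by (intro opial_modulus_lower_bound[OF r u _ e']) auto
  then have "b * (a * (1 + r)) \<le> b * (q * \<rho> + (q - 1) * a)"
    using b by (intro mult_left_mono) auto
  also have "\<dots> = a * (\<rho> + a - b)" using q by (simp add: algebra_simps)
  finally have "b * (1 + r) \<le> \<rho> + a - b" using b by (simp add: mult.left_commute)
  then show ?thesis unfolding b_def by (simp add: algebra_simps)
qed

lemma opial_center_estimate:
  assumes r: "ereal r \<le> opial_modulus M X N 1" and c: "c < 1 + r"
    and w: "\<And>i. w i \<in> X" and g: "g \<in> X" "tau_conv M w g" "(\<lambda>i. N (fdiff (w i) g)) \<longlonglongrightarrow> a"
    and y: "y \<in> X" "limsup_le (\<lambda>i. N (fdiff y (w i))) (c * a)"
  shows "N (fdiff y g) * (2 + r) \<le> (1 + c) * a"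
proof -
  define u where "u i = fdiff (w i) g" for i
  have u: "u i \<in> X" for i unfolding u_def by (intro X_fdiff w g)
  have tau: "tau_conv M u (\<lambda>_. 0)" unfolding u_def by (rule tau_conv_iff_fdiff[THEN iffD1, OF g(2)])
  have limu: "(\<lambda>i. N (u i)) \<longlonglongrightarrow> a" unfolding u_def by (rule g(3))
  have a: "0 \<le> a" using g(3) by (rule LIMSEQ_le_const) (simp add: N_fdiff_nonneg w g)
  have bound: "limsup_le (\<lambda>i. N (fdiff (u i) (fdiff y g))) (c * a)"
  proof -
    have "fdiff (u i) (fdiff y g) = fdiff (w i) y" for i unfolding u_def fdiff_def by auto
    then show ?thesis using y N_fdiff_commute[OF y(1) w] by simp
  qed
  have "N (fdiff y g) \<le> a"
  proof (rule ccontr)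
    assume less: "\<not> N (fdiff y g) \<le> a"
    have "limsup_le (\<lambda>i. N (fdiff y g)) (c * a + a)"
    proof (rule limsup_le_mono)
      show "N (fdiff y g) \<le> N (fdiff y (w i)) + N (fdiff (w i) g)" for i
        by (intro N_fdiff_triangle w g y)
      show "limsup_le (\<lambda>i. N (fdiff y (w i)) + N (fdiff (w i) g)) (c * a + a)"
        by (intro limsup_le_add y(2) limsup_le_if_tendsto g(3))
    qed simp
    then have "a \<noteq> 0" using less by (auto simp: limsup_le_const_iff)
    then have "a * (1 + r) \<le> c * a"
      by (intro opial_modulus_lower_bound[OF r u tau limu _ X_fdiff[OF y(1) g(1)] _ bound])
        (use a less in auto)
    then show False using c a \<open>a \<noteq> 0\<close> by (simp add: mult.commute)
  qed
  then have "N (fdiff y g) * (2 + r) \<le> c * a + a"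
    by (rule opial_modulus_interior_bound[OF r u tau limu X_fdiff[OF y(1) g(1)] _ bound])
  then show ?thesis by (simp add: algebra_simps)
qed

end

section \<open>Affine Lipschitzian self-maps and averages of their iterates\<close>

locale affine_self_map = function_space +
  fixes C :: "('a \<Rightarrow> real) set" and T :: "('a \<Rightarrow> real) \<Rightarrow> ('a \<Rightarrow> real)"
  assumes C_subset: "C \<subseteq> X" and C_nonempty: "C \<noteq> {}" and C_closed: "norm_closed X N C"
    and C_convex: "fconvex C" and C_bounded: "nbounded N C"
    and T_maps: "\<And>x. x \<in> C \<Longrightarrow> T x \<in> C" and T_affine: "affine_on M C T"
    and T_lipschitzian: "lipschitzian N C T"
begin

lemma C_in_X: "x \<in> C \<Longrightarrow> x \<in> X"
  using C_subset by auto

lemma N_fdiff_C_nonneg: "x \<in> C \<Longrightarrow> y \<in> C \<Longrightarrow> 0 \<le> N (fdiff x y)"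
  by (intro N_fdiff_nonneg C_in_X)

lemma C_diameter: obtains D where "0 \<le> D" "\<And>x y. x \<in> C \<Longrightarrow> y \<in> C \<Longrightarrow> N (fdiff x y) \<le> D"
proof -
  obtain B where B: "\<And>x. x \<in> C \<Longrightarrow> N x \<le> B" using C_bounded unfolding nbounded_def by auto
  obtain x0 where "x0 \<in> C" using C_nonempty by blast
  then have "0 \<le> 2 * B" using N_nonneg[OF C_in_X, of x0] B[of x0] by simp
  moreover have "N (fdiff x y) \<le> 2 * B" if "x \<in> C" "y \<in> C" for x y
    using N_fdiff_le_add[OF C_in_X C_in_X, OF that] B[OF that(1)] B[OF that(2)] by simp
  ultimately show ?thesis using that by blast
qed

lemma lipschitzian_nonneg_const:
  assumes "lipschitzian N C S"
  obtains L where "0 \<le> L" "\<And>x y. x \<in> C \<Longrightarrow> y \<in> C \<Longrightarrow> N (fdiff (S x) (S y)) \<le> L * N (fdiff x y)"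
proof -
  obtain k where k: "\<forall>x\<in>C. \<forall>y\<in>C. N (fdiff (S x) (S y)) \<le> k * N (fdiff x y)"
    using assms unfolding lipschitzian_def by auto
  have "N (fdiff (S x) (S y)) \<le> max k 0 * N (fdiff x y)" if "x \<in> C" "y \<in> C" for x y
    using k that N_fdiff_C_nonneg[OF that] by (meson max.cobounded1 mult_right_mono order_trans)
  then show ?thesis using that[of "max k 0"] by simp
qed

lemma funpow_in_C: "x \<in> C \<Longrightarrow> (T ^^ j) x \<in> C"
  by (induction j) (auto simp: T_maps)

lemma lipschitzian_funpow: "lipschitzian N C (T ^^ j)"
proof (induction j)
  case 0 then show ?case unfolding lipschitzian_def by (intro exI[of _ 1]) simp
next
  case (Suc j)
  obtain L where L: "0 \<le> L" "\<And>x y. x \<in> C \<Longrightarrow> y \<in> C \<Longrightarrow> N (fdiff ((T ^^ j) x) ((T ^^ j) y)) \<le> L * N (fdiff x y)"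
    using lipschitzian_nonneg_const[OF Suc.IH] by blast
  obtain L1 where L1: "0 \<le> L1" "\<And>x y. x \<in> C \<Longrightarrow> y \<in> C \<Longrightarrow> N (fdiff (T x) (T y)) \<le> L1 * N (fdiff x y)"
    using lipschitzian_nonneg_const[OF T_lipschitzian] by blast
  have "N (fdiff ((T ^^ Suc j) x) ((T ^^ Suc j) y)) \<le> (L1 * L) * N (fdiff x y)" if "x \<in> C" "y \<in> C" for x y
  proof -
    have "N (fdiff ((T ^^ Suc j) x) ((T ^^ Suc j) y)) \<le> L1 * N (fdiff ((T ^^ j) x) ((T ^^ j) y))"
      using L1 funpow_in_C that by simp
    also have "\<dots> \<le> L1 * (L * N (fdiff x y))" using L that L1(1) by (intro mult_left_mono) auto
    finally show ?thesis by simp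
  qed
  then show ?case unfolding lipschitzian_def by blast
qed

lemma lipconst_bdd:
  assumes "lipschitzian N C S"
  shows "bdd_above (insert 0 {N (fdiff (S x) (S y)) / N (fdiff x y) | x y.
                              x \<in> C \<and> y \<in> C \<and> N (fdiff x y) \<noteq> 0})"
proof -
  obtain L where L: "0 \<le> L" "\<And>x y. x \<in> C \<Longrightarrow> y \<in> C \<Longrightarrow> N (fdiff (S x) (S y)) \<le> L * N (fdiff x y)"
    using lipschitzian_nonneg_const[OF assms] by blast
  have "N (fdiff (S x) (S y)) / N (fdiff x y) \<le> L" if "x \<in> C" "y \<in> C" "N (fdiff x y) \<noteq> 0" for x y
    using L(2)[OF that(1,2)] N_fdiff_C_nonneg[OF that(1,2)] that(3) by (simp add: divide_le_eq)
  then show ?thesis using L(1) by (intro bdd_aboveI[of _ L]) auto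
qed

lemma lipconst_nonneg: "lipschitzian N C S \<Longrightarrow> 0 \<le> lipconst N C S"
  unfolding lipconst_def by (intro cSup_upper lipconst_bdd) auto

lemma lipconst_lipschitz:
  assumes S: "lipschitzian N C S" and xy: "x \<in> C" "y \<in> C"
  shows "N (fdiff (S x) (S y)) \<le> lipconst N C S * N (fdiff x y)"
proof (cases "N (fdiff x y) = 0")
  case True
  obtain L where "\<And>x y. x \<in> C \<Longrightarrow> y \<in> C \<Longrightarrow> N (fdiff (S x) (S y)) \<le> L * N (fdiff x y)"
    using lipschitzian_nonneg_const[OF S] by blast
  then show ?thesis using True xy by fastforce
next
  case False
  then have "0 < N (fdiff x y)" using N_fdiff_C_nonneg[OF xy] by simp
  moreover have "N (fdiff (S x) (S y)) / N (fdiff x y) \<le> lipconst N C S"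
    unfolding lipconst_def using xy False by (intro cSup_upper lipconst_bdd S) auto
  ultimately show ?thesis by (simp add: divide_le_eq)
qed

lemma avg_in_C: "finite I \<Longrightarrow> I \<noteq> {} \<Longrightarrow> (\<And>i. i \<in> I \<Longrightarrow> f i \<in> C) \<Longrightarrow> avg I f \<in> C"
proof (induction I rule: finite_ne_induct)
  case (singleton x)
  then show ?case by (simp add: avg_def)
next
  case (insert x F)
  define l where "l = 1 / real (Suc (card F))"
  have "0 \<le> l" "l \<le> 1" unfolding l_def by auto
  then show ?case unfolding avg_insert[OF insert(1,3,2)] l_def[symmetric]
    using C_convex insert unfolding fconvex_def by blast
qed

lemma T_avg_AE:
  "finite I \<Longrightarrow> I \<noteq> {} \<Longrightarrow> (\<And>i. i \<in> I \<Longrightarrow> f i \<in> C) \<Longrightarrow> AE w in M. T (avg I f) w = avg I (\<lambda>i. T (f i)) w"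
proof (induction I rule: finite_ne_induct)
  case (singleton x)
  then show ?case by (simp add: avg_def)
next
  case (insert x F)
  define l where "l = 1 / real (Suc (card F))"
  have l: "0 \<le> l" "l \<le> 1" unfolding l_def by auto
  have "f x \<in> C" "avg F f \<in> C" using insert avg_in_C by auto
  then have "AE w in M. T (\<lambda>v. l * f x v + (1 - l) * avg F f v) w = l * T (f x) w + (1 - l) * T (avg F f) w"
    using T_affine l unfolding affine_on_def by blast
  moreover have "AE w in M. T (avg F f) w = avg F (\<lambda>i. T (f i)) w" using insert by auto
  ultimately show ?case unfolding avg_insert[OF insert(1,3,2)] l_def[symmetric]
    by eventually_elim auto
qed

lemma N_fdiff_AE_cong:
  assumes "f \<in> X" "g \<in> X" "AE w in M. f w = g' w" "g' \<in> X"
  shows "N (fdiff f g) = N (fdiff g' g)"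
  using N_AE_cong[OF X_fdiff[OF assms(1,2)] X_measurable[OF X_fdiff[OF assms(4,2)]]] assms(3)
  by (auto simp: fdiff_def elim: AE_mp)

lemma avg_almost_fixed:
  assumes I: "finite I" "I \<noteq> {}" and f: "\<And>i. i \<in> I \<Longrightarrow> f i \<in> C"
  shows "N (fdiff (T (avg I f)) (avg I f)) \<le> (\<Sum>i\<in>I. N (fdiff (T (f i)) (f i))) / real (card I)"
proof -
  have avg: "avg I f \<in> C" "avg I (\<lambda>i. T (f i)) \<in> C" using avg_in_C[OF I] f T_maps by auto
  have "N (fdiff (T (avg I f)) (avg I f)) = N (fdiff (avg I (\<lambda>i. T (f i))) (avg I f))"
    by (rule N_fdiff_AE_cong[OF C_in_X[OF T_maps[OF avg(1)]] C_in_X[OF avg(1)] T_avg_AE[OF I f]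
          C_in_X[OF avg(2)]])
  also have "\<dots> \<le> (\<Sum>i\<in>I. N (fdiff (T (f i)) (f i))) / real (card I)"
    unfolding fdiff_avg_avg using I f by (intro N_avg_le X_fdiff C_in_X T_maps) auto
  finally show ?thesis .
qed

definition iter_avg :: "nat \<Rightarrow> ('a \<Rightarrow> real) \<Rightarrow> 'a \<Rightarrow> real" where
  "iter_avg p z = avg {1..p} (\<lambda>j. (T ^^ j) z)"

definition avg_lipconst :: "nat \<Rightarrow> real" where
  "avg_lipconst p = (\<Sum>j=1..p. lipconst N C (T ^^ j)) / real p"

lemma avg_lipconst_nonneg: "0 \<le> avg_lipconst p"
  unfolding avg_lipconst_def by (simp add: sum_nonneg lipconst_nonneg lipschitzian_funpow)

lemma S_coeff_eq: "S_coeff N C T = liminf (\<lambda>n. ereal (avg_lipconst n))"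
  unfolding S_coeff_def avg_lipconst_def ..

lemma S_coeff_nonneg: "0 \<le> S_coeff N C T"
  unfolding S_coeff_eq by (intro Liminf_bounded always_eventually) (simp add: avg_lipconst_nonneg)

lemma iter_avg_in_C: "1 \<le> p \<Longrightarrow> z \<in> C \<Longrightarrow> iter_avg p z \<in> C"
  unfolding iter_avg_def by (rule avg_in_C) (auto simp: funpow_in_C)

lemma iter_avg_lipschitz:
  assumes "1 \<le> p" "x \<in> C" "y \<in> C"
  shows "N (fdiff (iter_avg p x) (iter_avg p y)) \<le> avg_lipconst p * N (fdiff x y)"
proof -
  have "N (fdiff (iter_avg p x) (iter_avg p y)) \<le> (\<Sum>j=1..p. N (fdiff ((T ^^ j) x) ((T ^^ j) y))) / real p"
    unfolding iter_avg_def fdiff_avg_avg using assms N_avg_le[of "{1..p}"]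
    by (simp add: X_fdiff C_in_X funpow_in_C)
  also have "\<dots> \<le> (\<Sum>j=1..p. lipconst N C (T ^^ j) * N (fdiff x y)) / real p"
    using assms by (intro divide_right_mono sum_mono lipconst_lipschitz lipschitzian_funpow) auto
  also have "\<dots> = avg_lipconst p * N (fdiff x y)"
    unfolding avg_lipconst_def by (simp add: sum_distrib_right)
  finally show ?thesis .
qed

lemma iter_avg_almost_fixed:
  assumes p: "1 \<le> p" and z: "z \<in> C" and D: "\<And>x y. x \<in> C \<Longrightarrow> y \<in> C \<Longrightarrow> N (fdiff x y) \<le> D"
  shows "N (fdiff (T (iter_avg p z)) (iter_avg p z)) \<le> D / real p"
proof -
  have iter: "(T ^^ j) z \<in> C" for j by (rule funpow_in_C[OF z])
  have "fdiff (avg {1..p} (\<lambda>j. T ((T ^^ j) z))) (iter_avg p z)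
      = (\<lambda>w. (1 / real p) * fdiff ((T ^^ Suc p) z) (T z) w)"
  proof -
    have "(\<Sum>j = 1..p. (T ^^ Suc j) z w - (T ^^ j) z w) = (T ^^ Suc p) z w - (T ^^ 1) z w" for w
      using sum_Suc_diff[of 1 p "\<lambda>j. (T ^^ j) z w"] p by simp
    then show ?thesis unfolding iter_avg_def fdiff_def avg_def
      by (auto simp: fun_eq_iff sum_subtractf[symmetric] diff_divide_distrib[symmetric])
  qed
  moreover have "N (fdiff (T (iter_avg p z)) (iter_avg p z))
      = N (fdiff (avg {1..p} (\<lambda>j. T ((T ^^ j) z))) (iter_avg p z))"
    using p iter unfolding iter_avg_def
    by (intro N_fdiff_AE_cong T_avg_AE C_in_X T_maps avg_in_C) auto
  ultimately have "N (fdiff (T (iter_avg p z)) (iter_avg p z)) = (1 / real p) * N (fdiff ((T ^^ Suc p) z) (T z))"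
    using N_cmult[OF X_fdiff[OF C_in_X C_in_X], OF iter[of "Suc p"] iter[of 1], where c = "1 / real p"]
    by simp
  also have "\<dots> \<le> (1 / real p) * D"
    using D iter[of "Suc p"] iter[of 1] by (intro mult_left_mono) auto
  finally show ?thesis by simp
qed

lemma funpow_displacement:
  obtains K where "0 \<le> K" "\<And>x. x \<in> C \<Longrightarrow> N (fdiff ((T ^^ j) x) x) \<le> K * N (fdiff (T x) x)"
proof (induction j arbitrary: thesis)
  case 0
  then show ?case using N_fdiff_self[OF C_in_X] by (metis funpow_0 mult_zero_left order.refl)
next
  case (Suc j)
  obtain K where K: "0 \<le> K" "\<And>x. x \<in> C \<Longrightarrow> N (fdiff ((T ^^ j) x) x) \<le> K * N (fdiff (T x) x)"
    using Suc.IH by blast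
  obtain L where L: "0 \<le> L"
    "\<And>x y. x \<in> C \<Longrightarrow> y \<in> C \<Longrightarrow> N (fdiff ((T ^^ j) x) ((T ^^ j) y)) \<le> L * N (fdiff x y)"
    using lipschitzian_nonneg_const[OF lipschitzian_funpow] by blast
  have "N (fdiff ((T ^^ Suc j) x) x) \<le> (L + K) * N (fdiff (T x) x)" if x: "x \<in> C" for x
  proof -
    have "N (fdiff ((T ^^ Suc j) x) x) \<le> N (fdiff ((T ^^ j) (T x)) ((T ^^ j) x)) + N (fdiff ((T ^^ j) x) x)"
      by (simp add: funpow_swap1 N_fdiff_triangle C_in_X funpow_in_C T_maps x)
    also have "\<dots> \<le> L * N (fdiff (T x) x) + K * N (fdiff (T x) x)"
      using K L x T_maps by (intro add_mono) auto
    finally show ?thesis by (simp add: distrib_right)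
  qed
  then show ?case using Suc.prems K L by (metis add_nonneg_nonneg)
qed

lemma iter_avg_displacement:
  assumes "1 \<le> p"
  obtains K where "0 \<le> K" "\<And>x. x \<in> C \<Longrightarrow> N (fdiff (iter_avg p x) x) \<le> K * N (fdiff (T x) x)"
proof -
  have "\<forall>j. \<exists>K. 0 \<le> K \<and> (\<forall>x\<in>C. N (fdiff ((T ^^ j) x) x) \<le> K * N (fdiff (T x) x))"
    by (metis funpow_displacement)
  from choice[OF this] obtain K
    where K: "\<And>j. 0 \<le> K j" "\<And>j x. x \<in> C \<Longrightarrow> N (fdiff ((T ^^ j) x) x) \<le> K j * N (fdiff (T x) x)"
    by blast
  have "N (fdiff (iter_avg p x) x) \<le> ((\<Sum>j=1..p. K j) / real p) * N (fdiff (T x) x)" if x: "x \<in> C" for x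
  proof -
    have "N (fdiff (iter_avg p x) x) \<le> (\<Sum>j=1..p. N (fdiff ((T ^^ j) x) x)) / real p"
      unfolding iter_avg_def using assms x N_avg_le[of "{1..p}"]
      by (simp add: fdiff_avg_const X_fdiff C_in_X funpow_in_C)
    also have "\<dots> \<le> (\<Sum>j=1..p. K j * N (fdiff (T x) x)) / real p"
      using K x by (intro divide_right_mono sum_mono) auto
    also have "\<dots> = ((\<Sum>j=1..p. K j) / real p) * N (fdiff (T x) x)" by (simp add: sum_distrib_right)
    finally show ?thesis .
  qed
  moreover have "0 \<le> (\<Sum>j=1..p. K j) / real p" using K(1) by (simp add: sum_nonneg)
  ultimately show ?thesis using that by blast
qed

lemma fixed_point_of_limit:
  assumes c: "\<And>n. c n \<in> C" and x: "x \<in> X" "(\<lambda>n. N (fdiff (c n) x)) \<longlonglongrightarrow> 0"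
    and almost_fixed: "(\<lambda>n. N (fdiff (T (c n)) (c n))) \<longlonglongrightarrow> 0"
  shows "x \<in> C" "AE w in M. T x w = x w"
proof -
  show xC: "x \<in> C" using C_closed c x unfolding norm_closed_def by blast
  define L where "L = lipconst N C T"
  have L: "0 \<le> L" unfolding L_def by (rule lipconst_nonneg[OF T_lipschitzian])
  have "N (fdiff (T x) x) \<le> (L + 1) * N (fdiff (c n) x) + N (fdiff (T (c n)) (c n))" for n
  proof -
    have "N (fdiff (T x) x) \<le> N (fdiff (T x) (T (c n))) + N (fdiff (T (c n)) x)"
      by (intro N_fdiff_triangle C_in_X T_maps xC c)
    also have "N (fdiff (T (c n)) x) \<le> N (fdiff (T (c n)) (c n)) + N (fdiff (c n) x)"
      by (intro N_fdiff_triangle C_in_X T_maps xC c)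
    also have "N (fdiff (T x) (T (c n))) \<le> L * N (fdiff (c n) x)"
      using lipconst_lipschitz[OF T_lipschitzian xC c] N_fdiff_commute[OF C_in_X C_in_X, OF xC c]
      unfolding L_def by simp
    finally show ?thesis by (simp add: algebra_simps)
  qed
  moreover have "(\<lambda>n. (L + 1) * N (fdiff (c n) x) + N (fdiff (T (c n)) (c n))) \<longlonglongrightarrow> (L + 1) * 0 + 0"
    by (intro tendsto_intros x almost_fixed)
  ultimately have "N (fdiff (T x) x) \<le> 0" by (intro LIMSEQ_le_const) auto
  then have "N (fdiff (T x) x) = 0" using N_fdiff_C_nonneg[OF T_maps[OF xC] xC] by simp
  then show "AE w in M. T x w = x w" by (intro AE_eq_if_N_fdiff_eq_0 C_in_X T_maps xC)
qed

lemma prefix_avg_almost_fixed: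
  assumes v: "\<And>n. v n \<in> C" and almost_fixed: "(\<lambda>n. N (fdiff (T (v n)) (v n))) \<longlonglongrightarrow> 0"
  shows "(\<lambda>j. N (fdiff (T (avg {..j} v)) (avg {..j} v))) \<longlonglongrightarrow> 0"
proof (rule tendsto_sandwich[of "\<lambda>_. 0" _ _ "\<lambda>j. (\<Sum>i\<le>j. N (fdiff (T (v i)) (v i))) / real (Suc j)"])
  show "eventually (\<lambda>j. 0 \<le> N (fdiff (T (avg {..j} v)) (avg {..j} v))) sequentially"
    using v by (simp add: N_fdiff_C_nonneg T_maps avg_in_C)
  show "eventually (\<lambda>j. N (fdiff (T (avg {..j} v)) (avg {..j} v))
      \<le> (\<Sum>i\<le>j. N (fdiff (T (v i)) (v i))) / real (Suc j)) sequentially"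
    using avg_almost_fixed[of "{.._}" v] v by simp
  show "(\<lambda>j. (\<Sum>i\<le>j. N (fdiff (T (v i)) (v i))) / real (Suc j)) \<longlonglongrightarrow> 0"
    using v by (intro cesaro_mean_tendsto_0 almost_fixed N_fdiff_C_nonneg T_maps)
qed simp

lemma bounded_range_N_fdiff:
  assumes w: "\<And>j. w j \<in> C" and g: "g \<in> X"
  shows "bounded (range (\<lambda>j. N (fdiff (w j) g)))"
proof -
  obtain B where B: "\<And>x. x \<in> C \<Longrightarrow> N x \<le> B" using C_bounded unfolding nbounded_def by auto
  show ?thesis
  proof (rule boundedI)
    fix y assume "y \<in> range (\<lambda>j. N (fdiff (w j) g))"
    then obtain j where y: "y = N (fdiff (w j) g)" by blast
    show "norm y \<le> B + N g"
      using y N_fdiff_le_add[OF C_in_X[OF w] g, of j] B[OF w[of j]] N_fdiff_nonneg[OF C_in_X[OF w] g, of j]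
      by simp
  qed
qed

lemma komlos_averages:
  assumes komlos: "komlos_condition M X N" and v: "\<And>n. v n \<in> C"
    and almost_fixed: "(\<lambda>n. N (fdiff (T (v n)) (v n))) \<longlonglongrightarrow> 0"
  obtains w g a where "\<And>j. \<exists>I. finite I \<and> I \<noteq> {} \<and> w j = avg I v" "\<And>j. w j \<in> C" "g \<in> X"
    "tau_conv M w g" "(\<lambda>j. N (fdiff (w j) g)) \<longlonglongrightarrow> a" "(\<lambda>j. N (fdiff (T (w j)) (w j))) \<longlonglongrightarrow> 0"
proof -
  obtain B where B: "\<And>x. x \<in> C \<Longrightarrow> N x \<le> B" using C_bounded unfolding nbounded_def by auto
  have "\<exists>(\<sigma>::nat \<Rightarrow> nat) g. strict_mono \<sigma> \<and> g \<in> X \<and>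
      (\<forall>\<rho>::nat \<Rightarrow> nat. strict_mono \<rho> \<longrightarrow> (AE w in M. (\<lambda>n. (\<Sum>i<n. v (\<sigma> (\<rho> i)) w) / real n) \<longlonglongrightarrow> g w))"
    using komlos v B C_in_X unfolding komlos_condition_def by blast
  then obtain \<sigma> g where \<sigma>: "strict_mono \<sigma>" and g: "g \<in> X"
    and ae_all: "\<forall>\<rho>::nat \<Rightarrow> nat. strict_mono \<rho> \<longrightarrow>
      (AE w in M. (\<lambda>n. (\<Sum>i<n. v (\<sigma> (\<rho> i)) w) / real n) \<longlonglongrightarrow> g w)"
    by blast
  have ae: "AE w in M. (\<lambda>n. (\<Sum>i<n. v (\<sigma> i) w) / real n) \<longlonglongrightarrow> g w"
    using ae_all[rule_format, of id] by (simp add: strict_mono_def)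
  define w' where "w' j = avg {..j} (\<lambda>i. v (\<sigma> i))" for j
  have w'C: "w' j \<in> C" for j unfolding w'_def by (rule avg_in_C) (use v in auto)
  have "AE x in M. (\<lambda>j. w' j x) \<longlonglongrightarrow> g x"
    using ae
  proof eventually_elim
    case (elim x)
    have "(\<lambda>j. w' j x) = (\<lambda>j. (\<Sum>i<Suc j. v (\<sigma> i) x) / real (Suc j))"
      unfolding w'_def avg_def by (auto simp: lessThan_Suc_atMost)
    then show ?case using LIMSEQ_Suc[OF elim] by simp
  qed
  then have tau': "tau_conv M w' g"
    by (intro tau_conv_if_AE_tendsto X_measurable C_in_X w'C g)
  have fixed': "(\<lambda>j. N (fdiff (T (w' j)) (w' j))) \<longlonglongrightarrow> 0"
    unfolding w'_def using v LIMSEQ_subseq_LIMSEQ[OF almost_fixed \<sigma>]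
    by (intro prefix_avg_almost_fixed) (auto simp: comp_def)
  have bdd: "bounded (range (\<lambda>j. N (fdiff (w' j) g)))" by (rule bounded_range_N_fdiff[OF w'C g])
  obtain a \<theta> where \<theta>: "strict_mono \<theta>" "((\<lambda>j. N (fdiff (w' j) g)) \<circ> \<theta>) \<longlonglongrightarrow> a"
    using bounded_imp_convergent_subsequence[OF bdd] by blast
  show ?thesis
  proof (rule that[of "\<lambda>j. w' (\<theta> j)" g a])
    show "\<exists>I. finite I \<and> I \<noteq> {} \<and> w' (\<theta> j) = avg I v" for j
      unfolding w'_def using avg_reindex[OF strict_mono_imp_inj_on[OF \<sigma>], of "{..\<theta> j}" v]
      by (intro exI[of _ "\<sigma> ` {..\<theta> j}"]) simp
    show "tau_conv M (\<lambda>j. w' (\<theta> j)) g" by (rule tau_conv_subseq[OF \<theta>(1) tau'])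
    show "(\<lambda>j. N (fdiff (T (w' (\<theta> j))) (w' (\<theta> j)))) \<longlonglongrightarrow> 0"
      using LIMSEQ_subseq_LIMSEQ[OF fixed' \<theta>(1)] by (simp add: comp_def)
  qed (use w'C g \<theta>(2) in \<open>auto simp: comp_def\<close>)
qed

end

section \<open>Shrinking the radius\<close>

text \<open>The constants \<kappa>, l, r of the proof idea; l0 < l is a constant admissible in the
  definition of t(C), and ps enumerates indices p with k_p \<le> \<kappa>.\<close>

locale averaging_scheme = affine_self_map M X N C T
  for M :: "'a measure" and X N C T +
  fixes \<kappa> l l0 r :: real and ps :: "nat \<Rightarrow> nat"
  assumes komlos: "komlos_condition M X N" and opial: "nonstrict_opial M X N"
    and ps_mono: "strict_mono ps" and ps_pos: "1 \<le> ps 0"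
    and avg_lipconst_ps: "\<And>n. avg_lipconst (ps n) \<le> \<kappa>"
    and l0: "0 \<le> l0" "l0 < l"
    and t_coeff_l0: "\<And>s x. (\<forall>n. s n \<in> C) \<Longrightarrow> x \<in> X \<Longrightarrow> tau_conv M s x \<Longrightarrow>
      (INF c\<in>C. limsup (\<lambda>n. ereal (N (fdiff c (s n))))) \<le> ereal l0 * limsup (\<lambda>n. ereal (N (fdiff x (s n))))"
    and r: "ereal r \<le> opial_modulus M X N 1" and kappa_l: "\<kappa> * l < 1 + r"
begin

lemma kappa_nonneg: "0 \<le> \<kappa>"
  using avg_lipconst_nonneg avg_lipconst_ps order_trans by blast

lemma l_pos: "0 < l"
  using l0 by simp

lemma r_gt: "-1 < r"
  using kappa_l kappa_nonneg l_pos by (smt (verit) mult_nonneg_nonneg)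

definition lam :: real where
  "lam = (1 + \<kappa> * l) / (2 + r)"

lemma lam_nonneg: "0 \<le> lam"
  unfolding lam_def using r_gt kappa_nonneg l_pos by simp

lemma lam_less_1: "lam < 1"
  unfolding lam_def using r_gt kappa_l by (simp add: divide_less_eq)

lemma ps_ge: "Suc n \<le> ps n"
proof (induction n)
  case 0 then show ?case using ps_pos by simp
next
  case (Suc n)
  then show ?case using ps_mono strict_mono_Suc_iff by (metis Suc_le_eq le_less_trans)
qed

text \<open>A stage of the iteration: centre c, approximate fixed point sequence w converging in \<tau>
  to g, and radius a.\<close>

definition admissible :: "('a \<Rightarrow> real) \<Rightarrow> (nat \<Rightarrow> 'a \<Rightarrow> real) \<Rightarrow> ('a \<Rightarrow> real) \<Rightarrow> real \<Rightarrow> bool" where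
  "admissible c w g a \<longleftrightarrow> c \<in> C \<and> (\<forall>i. w i \<in> C) \<and> g \<in> X \<and> tau_conv M w g \<and>
     (\<lambda>i. N (fdiff (w i) g)) \<longlonglongrightarrow> a \<and> (\<lambda>i. N (fdiff (T (w i)) (w i))) \<longlonglongrightarrow> 0 \<and>
     limsup_le (\<lambda>i. N (fdiff c (w i))) (l * a)"

text \<open>This relation carries the bound l a on the old centre over to the sequence built from it
  at the next stage.\<close>

definition asymp_controlled :: "('a \<Rightarrow> real) \<Rightarrow> ('a \<Rightarrow> real) \<Rightarrow> bool" where
  "asymp_controlled z x \<longleftrightarrow> (\<forall>u \<beta>. (\<forall>i. u i \<in> C) \<and> (\<lambda>i. N (fdiff (T (u i)) (u i))) \<longlonglongrightarrow> 0 \<and>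
      limsup_le (\<lambda>i. N (fdiff z (u i))) \<beta> \<longrightarrow> limsup_le (\<lambda>i. N (fdiff x (u i))) (\<kappa> * \<beta>))"

lemma admissible_radius_nonneg: "admissible c w g a \<Longrightarrow> 0 \<le> a"
  unfolding admissible_def by (auto intro!: LIMSEQ_le_const simp: N_fdiff_nonneg C_in_X)

lemma iter_avg_ps_controlled:
  assumes z: "z \<in> C" shows "asymp_controlled z (iter_avg (ps n) z)"
  unfolding asymp_controlled_def
proof (intro allI impI, elim conjE)
  fix u \<beta> assume u: "\<forall>i. u i \<in> C" and fixed: "(\<lambda>i. N (fdiff (T (u i)) (u i))) \<longlonglongrightarrow> 0"
    and bound: "limsup_le (\<lambda>i. N (fdiff z (u i))) \<beta>"
  have p: "1 \<le> ps n" using ps_ge[of n] by simp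
  obtain K where K: "0 \<le> K" "\<And>x. x \<in> C \<Longrightarrow> N (fdiff (iter_avg (ps n) x) x) \<le> K * N (fdiff (T x) x)"
    using iter_avg_displacement[OF p] by blast
  have \<beta>: "0 \<le> \<beta>" using bound by (rule limsup_le_nonneg[rotated]) (simp add: N_fdiff_C_nonneg z u)
  show "limsup_le (\<lambda>i. N (fdiff (iter_avg (ps n) z) (u i))) (\<kappa> * \<beta>)"
  proof (rule limsup_le_mono)
    show "N (fdiff (iter_avg (ps n) z) (u i))
        \<le> avg_lipconst (ps n) * N (fdiff z (u i)) + K * N (fdiff (T (u i)) (u i))" for i
    proof -
      have "N (fdiff (iter_avg (ps n) z) (u i))
          \<le> N (fdiff (iter_avg (ps n) z) (iter_avg (ps n) (u i))) + N (fdiff (iter_avg (ps n) (u i)) (u i))"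
        using p z u by (intro N_fdiff_triangle C_in_X iter_avg_in_C) auto
      also have "\<dots> \<le> avg_lipconst (ps n) * N (fdiff z (u i)) + K * N (fdiff (T (u i)) (u i))"
        using p z u K by (intro add_mono iter_avg_lipschitz) auto
      finally show ?thesis .
    qed
    show "limsup_le (\<lambda>i. avg_lipconst (ps n) * N (fdiff z (u i)) + K * N (fdiff (T (u i)) (u i)))
        (avg_lipconst (ps n) * \<beta> + K * 0)"
      by (intro limsup_le_add limsup_le_cmult avg_lipconst_nonneg K(1) bound limsup_le_if_tendsto fixed)
    show "avg_lipconst (ps n) * \<beta> + K * 0 \<le> \<kappa> * \<beta>"
      using avg_lipconst_ps \<beta> by (simp add: mult_right_mono)
  qed
qed

lemma asymp_controlled_avg:
  assumes "finite I" "I \<noteq> {}" "\<And>q. q \<in> I \<Longrightarrow> f q \<in> C" "\<And>q. q \<in> I \<Longrightarrow> asymp_controlled z (f q)"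
  shows "asymp_controlled z (avg I f)"
  unfolding asymp_controlled_def
proof (intro allI impI, elim conjE)
  fix u \<beta> assume "\<forall>i. u i \<in> C" "(\<lambda>i. N (fdiff (T (u i)) (u i))) \<longlonglongrightarrow> 0"
    "limsup_le (\<lambda>i. N (fdiff z (u i))) \<beta>"
  with assms show "limsup_le (\<lambda>i. N (fdiff (avg I f) (u i))) (\<kappa> * \<beta>)"
    unfolding asymp_controlled_def by (intro limsup_le_avg C_in_X) auto
qed

lemma iter_avg_ps_almost_fixed:
  assumes z: "z \<in> C"
  shows "(\<lambda>n. N (fdiff (T (iter_avg (ps n) z)) (iter_avg (ps n) z))) \<longlonglongrightarrow> 0"
proof -
  obtain D where D: "0 \<le> D" "\<And>x y. x \<in> C \<Longrightarrow> y \<in> C \<Longrightarrow> N (fdiff x y) \<le> D"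
    using C_diameter by blast
  have in_C: "iter_avg (ps n) z \<in> C" for n using ps_ge[of n] by (intro iter_avg_in_C z) simp
  have upper: "N (fdiff (T (iter_avg (ps n) z)) (iter_avg (ps n) z)) \<le> D / real (Suc n)" for n
  proof -
    have "N (fdiff (T (iter_avg (ps n) z)) (iter_avg (ps n) z)) \<le> D / real (ps n)"
      using ps_ge[of n] by (intro iter_avg_almost_fixed z D(2)) auto
    also have "\<dots> \<le> D / real (Suc n)" using ps_ge[of n] D(1) by (intro divide_left_mono) auto
    finally show ?thesis .
  qed
  show ?thesis
  proof (rule tendsto_sandwich[of "\<lambda>_. 0" _ _ "\<lambda>n. D / real (Suc n)"])
    show "eventually (\<lambda>n. 0 \<le> N (fdiff (T (iter_avg (ps n) z)) (iter_avg (ps n) z))) sequentially"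
      using in_C by (simp add: N_fdiff_C_nonneg T_maps)
    show "eventually (\<lambda>n. N (fdiff (T (iter_avg (ps n) z)) (iter_avg (ps n) z)) \<le> D / real (Suc n)) sequentially"
      using upper by simp
    show "(\<lambda>n. D / real (Suc n)) \<longlonglongrightarrow> 0"
      using LIMSEQ_Suc[OF lim_const_over_n[of D]] by simp
  qed simp
qed

lemma exists_near_center:
  assumes w: "\<And>i. w i \<in> C" and g: "g \<in> X" "tau_conv M w g" "(\<lambda>i. N (fdiff (w i) g)) \<longlonglongrightarrow> a"
  obtains c where "c \<in> C" "limsup_le (\<lambda>i. N (fdiff c (w i))) (l * a)"
proof -
  have a: "0 \<le> a" using g(3) by (rule LIMSEQ_le_const) (simp add: N_fdiff_nonneg C_in_X w g)
  have lim: "(\<lambda>i. N (fdiff g (w i))) \<longlonglongrightarrow> a" using g(3) N_fdiff_commute[OF C_in_X[OF w] g(1)] by simp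
  show ?thesis
  proof (cases "a = 0")
    case True
    then have "g \<in> C" using C_closed w g unfolding norm_closed_def by blast
    then show ?thesis by (rule that) (use limsup_le_if_tendsto[OF lim] True in simp)
  next
    case False
    have "limsup (\<lambda>n. ereal (N (fdiff g (w n)))) = ereal a"
      using lim by (intro lim_imp_Limsup) (auto simp: tendsto_ereal)
    then have "(INF c\<in>C. limsup (\<lambda>n. ereal (N (fdiff c (w n))))) \<le> ereal (l0 * a)"
      using t_coeff_l0[of w g] w g by simp
    also have "\<dots> < ereal (l * a)" using l0 a False by simp
    finally obtain c where "c \<in> C" "limsup (\<lambda>n. ereal (N (fdiff c (w n)))) < ereal (l * a)"
      by (auto simp: INF_less_iff)
    then show ?thesis by (intro that) (auto simp: limsup_le_iff intro: less_imp_le)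
  qed
qed

lemma admissible_from:
  assumes z: "z \<in> C"
  obtains c w g a where "admissible c w g a" "\<And>j. asymp_controlled z (w j)"
proof -
  define v where "v n = iter_avg (ps n) z" for n
  have v: "v n \<in> C" for n unfolding v_def using ps_ge[of n] by (intro iter_avg_in_C z) auto
  obtain w g a where avgs: "\<And>j. \<exists>I. finite I \<and> I \<noteq> {} \<and> w j = avg I v" and w: "\<And>j. w j \<in> C"
    and g: "g \<in> X" "tau_conv M w g" "(\<lambda>j. N (fdiff (w j) g)) \<longlonglongrightarrow> a"
    and fixed: "(\<lambda>j. N (fdiff (T (w j)) (w j))) \<longlonglongrightarrow> 0"
    using komlos_averages[OF komlos v iter_avg_ps_almost_fixed[OF z, folded v_def]] by blast
  obtain c where "c \<in> C" "limsup_le (\<lambda>i. N (fdiff c (w i))) (l * a)"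
    using exists_near_center[OF w g] by blast
  then have "admissible c w g a" unfolding admissible_def using w g fixed by blast
  moreover have "asymp_controlled z (w j)" for j
  proof -
    obtain I where I: "finite I" "I \<noteq> {}" "w j = avg I v" using avgs[of j] by blast
    show ?thesis unfolding I(3)
      by (rule asymp_controlled_avg[OF I(1,2) v]) (simp add: v_def iter_avg_ps_controlled[OF z])
  qed
  ultimately show ?thesis by (rule that)
qed

lemma admissible_radius_contracts:
  assumes adm: "admissible c w g a" and adm': "admissible c' w' g' a'"
    and control: "\<And>j. limsup_le (\<lambda>i. N (fdiff (w' j) (w i))) (\<kappa> * l * a)"
  shows "a' \<le> lam * a"
proof -
  have w: "\<And>i. w i \<in> C" and g: "g \<in> X" "tau_conv M w g" "(\<lambda>i. N (fdiff (w i) g)) \<longlonglongrightarrow> a"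
    using adm unfolding admissible_def by auto
  have w': "\<And>i. w' i \<in> C" and g': "g' \<in> X" "tau_conv M w' g'" "(\<lambda>i. N (fdiff (w' i) g')) \<longlonglongrightarrow> a'"
    using adm' unfolding admissible_def by auto
  have "N (fdiff (w' j) g) \<le> lam * a" for j
  proof -
    have "N (fdiff (w' j) g) * (2 + r) \<le> (1 + \<kappa> * l) * a"
      by (rule opial_center_estimate[OF r kappa_l C_in_X[OF w] g C_in_X[OF w'] control])
    then show ?thesis unfolding lam_def using r_gt by (simp add: le_divide_eq mult.commute)
  qed
  then have "liminf (\<lambda>n. ereal (N (fdiff (w' n) g))) \<le> ereal (lam * a)"
    by (intro Liminf_le always_eventually) auto
  moreover have "liminf (\<lambda>n. ereal (N (fdiff (w' n) g'))) \<le> liminf (\<lambda>n. ereal (N (fdiff (w' n) g)))"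
    using opial g g' w' C_in_X unfolding nonstrict_opial_def by blast
  moreover have "liminf (\<lambda>n. ereal (N (fdiff (w' n) g'))) = ereal a'"
    using g'(3) by (intro lim_imp_Liminf) (auto simp: tendsto_ereal)
  ultimately have "ereal a' \<le> ereal (lam * a)" by (metis order.trans)
  then show ?thesis by simp
qed

lemma admissible_center_dist:
  assumes adm: "admissible c w g a" and adm': "admissible c' w' g' a'"
    and control: "\<And>j. limsup_le (\<lambda>i. N (fdiff (w' j) (w i))) (\<kappa> * l * a)"
  shows "N (fdiff c' c) \<le> l * a' + \<kappa> * l * a + l * a"
proof -
  have c: "c \<in> C" "limsup_le (\<lambda>i. N (fdiff c (w i))) (l * a)" and w: "\<And>i. w i \<in> C"
    using adm unfolding admissible_def by auto
  have c': "c' \<in> C" "limsup_le (\<lambda>j. N (fdiff c' (w' j))) (l * a')" and w': "\<And>j. w' j \<in> C"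
    using adm' unfolding admissible_def by auto
  have bound_j: "N (fdiff c' c) \<le> N (fdiff c' (w' j)) + (\<kappa> * l * a + l * a)" for j
  proof -
    have "limsup_le (\<lambda>i. N (fdiff c' c)) (N (fdiff c' (w' j)) + \<kappa> * l * a + l * a)"
    proof (rule limsup_le_mono)
      show "N (fdiff c' c) \<le> N (fdiff c' (w' j)) + N (fdiff (w' j) (w i)) + N (fdiff c (w i))" for i
        using N_fdiff_triangle[OF C_in_X C_in_X C_in_X, OF c'(1) w' c(1), of j]
          N_fdiff_triangle[OF C_in_X C_in_X C_in_X, OF w' w c(1), of j i]
          N_fdiff_commute[OF C_in_X C_in_X, OF w c(1), of i] by simp
      show "limsup_le (\<lambda>i. N (fdiff c' (w' j)) + N (fdiff (w' j) (w i)) + N (fdiff c (w i)))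
          (N (fdiff c' (w' j)) + \<kappa> * l * a + l * a)"
        by (intro limsup_le_add limsup_le_const_iff[THEN iffD2] control c(2) order.refl)
    qed simp
    then show ?thesis by (simp add: limsup_le_const_iff)
  qed
  have "limsup_le (\<lambda>j. N (fdiff c' c)) (l * a' + (\<kappa> * l * a + l * a))"
  proof (rule limsup_le_mono)
    show "limsup_le (\<lambda>j. N (fdiff c' (w' j)) + (\<kappa> * l * a + l * a)) (l * a' + (\<kappa> * l * a + l * a))"
      by (intro limsup_le_add c'(2) limsup_le_const_iff[THEN iffD2] order.refl)
  qed (use bound_j in simp_all)
  then show ?thesis by (simp add: limsup_le_const_iff)
qed

lemma admissible_step:
  assumes adm: "admissible c w g a"
  obtains c' w' g' a' where "admissible c' w' g' a'" "a' \<le> lam * a" "N (fdiff c' c) \<le> (2 + \<kappa>) * l * a"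
proof -
  have "c \<in> C" "\<And>i. w i \<in> C" "(\<lambda>i. N (fdiff (T (w i)) (w i))) \<longlonglongrightarrow> 0"
    "limsup_le (\<lambda>i. N (fdiff c (w i))) (l * a)"
    using adm unfolding admissible_def by auto
  obtain c' w' g' a' where adm': "admissible c' w' g' a'" and "\<And>j. asymp_controlled c (w' j)"
    using admissible_from[OF \<open>c \<in> C\<close>] by metis
  then have control: "limsup_le (\<lambda>i. N (fdiff (w' j) (w i))) (\<kappa> * l * a)" for j
    using \<open>\<And>i. w i \<in> C\<close> \<open>(\<lambda>i. N (fdiff (T (w i)) (w i))) \<longlonglongrightarrow> 0\<close> \<open>limsup_le _ (l * a)\<close>
    unfolding asymp_controlled_def by (simp add: mult.assoc)
  have contracts: "a' \<le> lam * a" by (rule admissible_radius_contracts[OF adm adm' control])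
  then have "l * a' \<le> l * a"
    using lam_less_1 admissible_radius_nonneg[OF adm] l_pos
    by (intro mult_left_mono) (auto intro: order_trans[OF _ mult_left_le_one_le[of a lam]] simp: lam_nonneg)
  then have "N (fdiff c' c) \<le> (2 + \<kappa>) * l * a"
    using admissible_center_dist[OF adm adm' control] by (simp add: algebra_simps)
  then show ?thesis using that adm' contracts by blast
qed

lemma admissible_displacement:
  assumes "admissible c w g a"
  shows "N (fdiff (T c) c) \<le> (lipconst N C T + 1) * l * a"
proof -
  have c: "c \<in> C" "limsup_le (\<lambda>i. N (fdiff c (w i))) (l * a)" and w: "\<And>i. w i \<in> C"
    and fixed: "(\<lambda>i. N (fdiff (T (w i)) (w i))) \<longlonglongrightarrow> 0"
    using assms unfolding admissible_def by auto
  define L where "L = lipconst N C T"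
  have L: "0 \<le> L" unfolding L_def by (rule lipconst_nonneg[OF T_lipschitzian])
  have "limsup_le (\<lambda>i. N (fdiff (T c) c)) (L * (l * a) + 0 + l * a)"
  proof (rule limsup_le_mono)
    show "N (fdiff (T c) c) \<le> L * N (fdiff c (w i)) + N (fdiff (T (w i)) (w i)) + N (fdiff c (w i))" for i
    proof -
      have "N (fdiff (T c) c) \<le> N (fdiff (T c) (T (w i))) + N (fdiff (T (w i)) c)"
        by (intro N_fdiff_triangle C_in_X T_maps c w)
      also have "N (fdiff (T (w i)) c) \<le> N (fdiff (T (w i)) (w i)) + N (fdiff (w i) c)"
        by (intro N_fdiff_triangle C_in_X T_maps c w)
      also have "N (fdiff (w i) c) = N (fdiff c (w i))" by (intro N_fdiff_commute C_in_X c w)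
      also have "N (fdiff (T c) (T (w i))) \<le> L * N (fdiff c (w i))"
        unfolding L_def by (intro lipconst_lipschitz T_lipschitzian c w)
      finally show ?thesis by simp
    qed
    show "limsup_le (\<lambda>i. L * N (fdiff c (w i)) + N (fdiff (T (w i)) (w i)) + N (fdiff c (w i)))
        (L * (l * a) + 0 + l * a)"
      by (intro limsup_le_add limsup_le_cmult L c(2) limsup_le_if_tendsto fixed)
  qed simp
  then show ?thesis unfolding L_def by (simp add: limsup_le_const_iff algebra_simps)
qed

lemma admissible_chain:
  obtains cs as where "\<And>n. \<exists>w g. admissible (cs n) w g (as n)"
    "\<And>n. as (Suc n) \<le> lam * as n" "\<And>n. N (fdiff (cs (Suc n)) (cs n)) \<le> (2 + \<kappa>) * l * as n"
proof -
  obtain z where "z \<in> C" using C_nonempty by blast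
  then obtain c0 w0 g0 a0 where adm0: "admissible c0 w0 g0 a0" using admissible_from by metis
  have "\<exists>f. \<forall>n. (\<exists>w g. admissible (fst (f n)) w g (snd (f n))) \<and>
      snd (f (Suc n)) \<le> lam * snd (f n) \<and> N (fdiff (fst (f (Suc n))) (fst (f n))) \<le> (2 + \<kappa>) * l * snd (f n)"
  proof (rule dependent_nat_choice)
    show "\<exists>x. \<exists>w g. admissible (fst x) w g (snd x)" using adm0 by (intro exI[of _ "(c0, a0)"]) auto
  next
    fix x :: "('a \<Rightarrow> real) \<times> real" and n assume "\<exists>w g. admissible (fst x) w g (snd x)"
    then obtain w g where "admissible (fst x) w g (snd x)" by blast
    then obtain c' w' g' a' where "admissible c' w' g' a'" "a' \<le> lam * snd x"
      "N (fdiff c' (fst x)) \<le> (2 + \<kappa>) * l * snd x"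
      by (rule admissible_step)
    then show "\<exists>y. (\<exists>w g. admissible (fst y) w g (snd y)) \<and> snd y \<le> lam * snd x \<and>
        N (fdiff (fst y) (fst x)) \<le> (2 + \<kappa>) * l * snd x"
      by (intro exI[of _ "(c', a')"]) auto
  qed
  then obtain f where "\<forall>n. (\<exists>w g. admissible (fst (f n)) w g (snd (f n))) \<and>
      snd (f (Suc n)) \<le> lam * snd (f n) \<and> N (fdiff (fst (f (Suc n))) (fst (f n))) \<le> (2 + \<kappa>) * l * snd (f n)"
    by blast
  then show ?thesis by (intro that[of "\<lambda>n. fst (f n)" "\<lambda>n. snd (f n)"]) auto
qed

theorem fixed_point: "\<exists>x\<in>C. AE w in M. T x w = x w"
proof -
  obtain cs as where adm: "\<And>n. \<exists>w g. admissible (cs n) w g (as n)"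
    and contract: "\<And>n. as (Suc n) \<le> lam * as n" and step: "\<And>n. N (fdiff (cs (Suc n)) (cs n)) \<le> (2 + \<kappa>) * l * as n"
    using admissible_chain by metis
  have cs: "cs n \<in> C" and as: "0 \<le> as n" for n
    using adm[of n] admissible_radius_nonneg unfolding admissible_def by auto
  have as_pow: "as n \<le> lam ^ n * as 0" for n
  proof (induction n)
    case (Suc n)
    have "as (Suc n) \<le> lam * as n" by (rule contract)
    also have "\<dots> \<le> lam * (lam ^ n * as 0)" using Suc lam_nonneg by (intro mult_left_mono)
    finally show ?case by simp
  qed simp
  have "\<exists>x\<in>X. (\<lambda>n. N (fdiff (cs n) x)) \<longlonglongrightarrow> 0"
  proof (rule geometric_cauchy_limit[OF C_in_X[OF cs] lam_nonneg lam_less_1])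
    show "0 \<le> (2 + \<kappa>) * l * as 0" using kappa_nonneg l_pos as by simp
    show "N (fdiff (cs (Suc n)) (cs n)) \<le> (2 + \<kappa>) * l * as 0 * lam ^ n" for n
      using step[of n] mult_left_mono[OF as_pow[of n], of "(2 + \<kappa>) * l"] kappa_nonneg l_pos
      by (simp add: algebra_simps)
  qed
  then obtain x where x: "x \<in> X" "(\<lambda>n. N (fdiff (cs n) x)) \<longlonglongrightarrow> 0" by blast
  have as_lim: "as \<longlonglongrightarrow> 0"
  proof (rule tendsto_sandwich[of "\<lambda>_. 0" _ _ "\<lambda>n. lam ^ n * as 0"])
    show "(\<lambda>n. lam ^ n * as 0) \<longlonglongrightarrow> 0"
      using lam_nonneg lam_less_1 by (intro tendsto_mult_left_zero LIMSEQ_power_zero) simp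
  qed (use as as_pow in simp_all)
  have "(\<lambda>n. N (fdiff (T (cs n)) (cs n))) \<longlonglongrightarrow> 0"
  proof (rule tendsto_sandwich[of "\<lambda>_. 0" _ _ "\<lambda>n. (lipconst N C T + 1) * l * as n"])
    show "eventually (\<lambda>n. 0 \<le> N (fdiff (T (cs n)) (cs n))) sequentially"
      by (simp add: N_fdiff_C_nonneg T_maps cs)
    show "eventually (\<lambda>n. N (fdiff (T (cs n)) (cs n)) \<le> (lipconst N C T + 1) * l * as n) sequentially"
      using adm admissible_displacement by (blast intro: always_eventually)
    show "(\<lambda>n. (lipconst N C T + 1) * l * as n) \<longlonglongrightarrow> 0"
      using tendsto_mult_left[OF as_lim, of "(lipconst N C T + 1) * l"] by simp
  qed simp
  then show ?thesis using fixed_point_of_limit[OF cs x] by blast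
qed

end

theorem mainTheorem2:
  fixes M :: "'a measure" and X :: "('a \<Rightarrow> real) set" and N :: "('a \<Rightarrow> real) \<Rightarrow> real"
    and C :: "('a \<Rightarrow> real) set" and T :: "('a \<Rightarrow> real) \<Rightarrow> ('a \<Rightarrow> real)"
  assumes "sigma_finite_measure M"
    and "banach_function_space M X N"
    and "komlos_condition M X N"
    and "nonstrict_opial M X N"
    and "C \<subseteq> X" and "C \<noteq> {}"
    and "norm_closed X N C" and "fconvex C" and "nbounded N C"
    and "\<forall>x\<in>C. T x \<in> C"
    and "affine_on M C T" and "lipschitzian N C T"
    and "S_coeff N C T < (1 + opial_modulus M X N 1) / t_coeff M X N C"
  shows "\<exists>x\<in>C. AE w in M. T x w = x w"
proof -
  interpret affine_self_map M X N C T
    using assms by unfold_locales auto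
  obtain q l r where qlr: "S_coeff N C T < ereal q" "t_coeff M X N C < ereal l"
    "ereal r \<le> opial_modulus M X N 1" "q * l < 1 + r" "0 < l"
    using exists_real_constants[OF assms(13) S_coeff_nonneg t_coeff_nonneg opial_modulus_ge_minus_1]
    by blast
  obtain l0 where l0: "0 \<le> l0" "l0 < l"
    "\<And>s x. (\<forall>n. s n \<in> C) \<Longrightarrow> x \<in> X \<Longrightarrow> tau_conv M s x \<Longrightarrow>
      (INF c\<in>C. limsup (\<lambda>n. ereal (N (fdiff c (s n))))) \<le> ereal l0 * limsup (\<lambda>n. ereal (N (fdiff x (s n))))"
    using t_coeff_less_witness[OF qlr(2)] by metis
  have "frequently (\<lambda>n. 1 \<le> n \<and> avg_lipconst n \<le> q) sequentially"
    using frequently_le_if_liminf_less[OF qlr(1)[unfolded S_coeff_eq]]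
    by (intro frequently_eventually_conj) (auto simp: eventually_ge_at_top)
  then obtain ps :: "nat \<Rightarrow> nat" where "strict_mono ps" "\<forall>n. 1 \<le> ps n \<and> avg_lipconst (ps n) \<le> q"
    using frequently_imp_subseq by blast
  then interpret averaging_scheme M X N C T q l l0 r ps
    using assms l0 qlr by unfold_locales auto
  show ?thesis by (rule fixed_point)
qed

end
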